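(* Let $(S,\|\cdot\|)$ be a complete $RN$ module over $K$ with base $(\Omega,\mathcal F,P)$, and let $A:D(A)\subset S\to S$ be a module homomorphism with $L^{0}_{++}(\mathcal F)\subset\rho(A)$. If there exists $M\in L^{0}_{+}(\mathcal F)$ with $M\geq1$ such that $\|\xi^{n}R(\xi,A)^{n}\|\leq M$ for any $n\in N$ and $\xi\in L^{0}_{++}(\mathcal F)$, then there exists an $L^{0}$-norm $|\cdot|$ on $S$ which is equivalent to $\|\cdot\|$ and satisfies $\|x\|\leq|x|\leq M\|x\|$ for any $x\in S$, and $|\xi R(\xi,A)x|\leq|x|$ for any $x\in S$ and $\xi\in L^{0}_{++}(\mathcal F)$.
   Context: $(\Omega,\mathcal F,P)$ is a probability space; $L^{0}(\mathcal F,K)$ ($K=R$ or $C$) is the algebra of equivalence classes of $K$-valued $\mathcal F$-measurable random variables, ordered a.s.; $L^{0}_{+}(\mathcal F)=\{\xi\in L^0(\mathcal F,R):\xi\ge 0\}$, $L^{0}_{++}(\mathcal F)=\{\xi\in L^0(\mathcal F,R):\xi>0\text{ a.s.}\}$. An $RN$ module over $K$ with base $(\Omega,\mathcal F,P)$ is a left $L^0(\mathcal F,K)$-module $S$ with a map $\|\cdot\|:S\to L^0_+(\mathcal F)$ (an $L^0$-norm) such that $\|\xi x\|=|\xi|\|x\|$, $\|x+y\|\le\|x\|+\|y\|$, $\|x\|=0\Rightarrow x=0$; it carries the $(\varepsilon,\lambda)$-topology ($x_n\to x$ iff $\|x_n-x\|\to0$ in probability); completeness refers to this topology. Two $L^0$-norms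 are equivalent if they induce the same $(\varepsilon,\lambda)$-topology. $B(S)$ is the set of continuous module homomorphisms $S\to S$, with $\|T\|=\bigwedge\{\xi\in L^0_+(\mathcal F):\|Tx\|\le\xi\|x\|\ \forall x\}$. $\rho(A)=\{\xi\in L^0(\mathcal F,K):\xi I-A:D(A)\to S\text{ is bijective and }(\xi I-A)^{-1}\in B(S)\}$, $R(\xi,A)=(\xi I-A)^{-1}$. *)

theory Defs
  imports "HOL-Probability.Probability"
begin

text \<open>Random variables are represented by measurable functions; equivalence
classes are handled by stating every (in)equality almost everywhere.\<close>

definition L0 :: "'w measure \<Rightarrow> ('w \<Rightarrow> 'k::real_normed_field) set" where
  "L0 M = borel_measurable M"

definition L0_plus :: "'w measure \<Rightarrow> ('w \<Rightarrow> real) set" where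
  "L0_plus M = {\<xi> \<in> borel_measurable M. AE \<omega> in M. \<xi> \<omega> \<ge> 0}"

definition L0_pp :: "'w measure \<Rightarrow> ('w \<Rightarrow> real) set" where
  "L0_pp M = {\<xi> \<in> borel_measurable M. AE \<omega> in M. \<xi> \<omega> > 0}"

definition is_L0_module ::
  "'w measure \<Rightarrow> (('w \<Rightarrow> 'k::real_normed_field) \<Rightarrow> 's::ab_group_add \<Rightarrow> 's) \<Rightarrow> bool" where
  "is_L0_module M sm \<longleftrightarrow>
     (\<forall>\<xi>\<in>L0 M. \<forall>\<eta>\<in>L0 M. (AE \<omega> in M. \<xi> \<omega> = \<eta> \<omega>) \<longrightarrow> (\<forall>x. sm \<xi> x = sm \<eta> x)) \<and>
     (\<forall>\<xi>\<in>L0 M. \<forall>x y. sm \<xi> (x + y) = sm \<xi> x + sm \<xi> y) \<and>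
     (\<forall>\<xi>\<in>L0 M. \<forall>\<eta>\<in>L0 M. \<forall>x. sm (\<lambda>\<omega>. \<xi> \<omega> + \<eta> \<omega>) x = sm \<xi> x + sm \<eta> x) \<and>
     (\<forall>\<xi>\<in>L0 M. \<forall>\<eta>\<in>L0 M. \<forall>x. sm (\<lambda>\<omega>. \<xi> \<omega> * \<eta> \<omega>) x = sm \<xi> (sm \<eta> x)) \<and>
     (\<forall>x. sm (\<lambda>\<omega>. 1) x = x)"

definition is_L0_norm ::
  "'w measure \<Rightarrow> (('w \<Rightarrow> 'k::real_normed_field) \<Rightarrow> 's::ab_group_add \<Rightarrow> 's)
     \<Rightarrow> ('s \<Rightarrow> 'w \<Rightarrow> real) \<Rightarrow> bool" where
  "is_L0_norm M sm nrm \<longleftrightarrow>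
     (\<forall>x. nrm x \<in> L0_plus M) \<and>
     (\<forall>\<xi>\<in>L0 M. \<forall>x. AE \<omega> in M. nrm (sm \<xi> x) \<omega> = norm (\<xi> \<omega>) * nrm x \<omega>) \<and>
     (\<forall>x y. AE \<omega> in M. nrm (x + y) \<omega> \<le> nrm x \<omega> + nrm y \<omega>) \<and>
     (\<forall>x. (AE \<omega> in M. nrm x \<omega> = 0) \<longrightarrow> x = 0)"

definition is_RN_module ::
  "'w measure \<Rightarrow> (('w \<Rightarrow> 'k::real_normed_field) \<Rightarrow> 's::ab_group_add \<Rightarrow> 's)
     \<Rightarrow> ('s \<Rightarrow> 'w \<Rightarrow> real) \<Rightarrow> bool" where
  "is_RN_module M sm nrm \<longleftrightarrow> prob_space M \<and> is_L0_module M sm \<and> is_L0_norm M sm nrm"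

text \<open>Convergence in the (epsilon,lambda)-topology: the norm of the difference
tends to 0 in probability.  The topology is metrizable, so it is determined
by its convergent sequences.\<close>
definition eps_lambda_conv ::
  "'w measure \<Rightarrow> ('s::ab_group_add \<Rightarrow> 'w \<Rightarrow> real) \<Rightarrow> (nat \<Rightarrow> 's) \<Rightarrow> 's \<Rightarrow> bool" where
  "eps_lambda_conv M nrm xs x \<longleftrightarrow>
     (\<forall>\<epsilon>>0. (\<lambda>n. measure M {\<omega> \<in> space M. nrm (xs n - x) \<omega> \<ge> \<epsilon>}) \<longlonglongrightarrow> 0)"

definition eps_lambda_Cauchy ::
  "'w measure \<Rightarrow> ('s::ab_group_add \<Rightarrow> 'w \<Rightarrow> real) \<Rightarrow> (nat \<Rightarrow> 's) \<Rightarrow> bool" where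
  "eps_lambda_Cauchy M nrm xs \<longleftrightarrow>
     (\<forall>\<epsilon>>0. \<forall>\<delta>>0. \<exists>N. \<forall>m\<ge>N. \<forall>n\<ge>N.
        measure M {\<omega> \<in> space M. nrm (xs n - xs m) \<omega> \<ge> \<epsilon>} < \<delta>)"

definition eps_lambda_complete ::
  "'w measure \<Rightarrow> ('s::ab_group_add \<Rightarrow> 'w \<Rightarrow> real) \<Rightarrow> bool" where
  "eps_lambda_complete M nrm \<longleftrightarrow>
     (\<forall>xs. eps_lambda_Cauchy M nrm xs \<longrightarrow> (\<exists>x. eps_lambda_conv M nrm xs x))"

definition equivalent_L0_norms ::
  "'w measure \<Rightarrow> ('s::ab_group_add \<Rightarrow> 'w \<Rightarrow> real) \<Rightarrow> ('s \<Rightarrow> 'w \<Rightarrow> real) \<Rightarrow> bool" where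
  "equivalent_L0_norms M n1 n2 \<longleftrightarrow>
     (\<forall>xs x. eps_lambda_conv M n1 xs x \<longleftrightarrow> eps_lambda_conv M n2 xs x)"

definition is_submodule ::
  "'w measure \<Rightarrow> (('w \<Rightarrow> 'k::real_normed_field) \<Rightarrow> 's::ab_group_add \<Rightarrow> 's) \<Rightarrow> 's set \<Rightarrow> bool" where
  "is_submodule M sm D \<longleftrightarrow> 0 \<in> D \<and> (\<forall>x\<in>D. \<forall>y\<in>D. x + y \<in> D) \<and>
     (\<forall>\<xi>\<in>L0 M. \<forall>x\<in>D. sm \<xi> x \<in> D)"

definition is_module_hom ::
  "'w measure \<Rightarrow> (('w \<Rightarrow> 'k::real_normed_field) \<Rightarrow> 's::ab_group_add \<Rightarrow> 's) \<Rightarrow> 's set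
     \<Rightarrow> ('s \<Rightarrow> 's) \<Rightarrow> bool" where
  "is_module_hom M sm D T \<longleftrightarrow>
     (\<forall>x\<in>D. \<forall>y\<in>D. T (x + y) = T x + T y) \<and>
     (\<forall>\<xi>\<in>L0 M. \<forall>x\<in>D. T (sm \<xi> x) = sm \<xi> (T x))"

text \<open>B(S): continuous module homomorphisms S -> S (sequential continuity
suffices since the (epsilon,lambda)-topology is metrizable).\<close>
definition in_BS ::
  "'w measure \<Rightarrow> (('w \<Rightarrow> 'k::real_normed_field) \<Rightarrow> 's::ab_group_add \<Rightarrow> 's)
     \<Rightarrow> ('s \<Rightarrow> 'w \<Rightarrow> real) \<Rightarrow> ('s \<Rightarrow> 's) \<Rightarrow> bool" where
  "in_BS M sm nrm T \<longleftrightarrow> is_module_hom M sm UNIV T \<and>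
     (\<forall>xs x. eps_lambda_conv M nrm xs x \<longrightarrow> eps_lambda_conv M nrm (\<lambda>n. T (xs n)) (T x))"

definition is_L0_inf :: "'w measure \<Rightarrow> ('w \<Rightarrow> real) set \<Rightarrow> ('w \<Rightarrow> real) \<Rightarrow> bool" where
  "is_L0_inf M F g \<longleftrightarrow> g \<in> borel_measurable M \<and>
     (\<forall>f\<in>F. AE \<omega> in M. g \<omega> \<le> f \<omega>) \<and>
     (\<forall>h\<in>borel_measurable M. (\<forall>f\<in>F. AE \<omega> in M. h \<omega> \<le> f \<omega>) \<longrightarrow> (AE \<omega> in M. h \<omega> \<le> g \<omega>))"

definition L0_opnorm ::
  "'w measure \<Rightarrow> ('s::ab_group_add \<Rightarrow> 'w \<Rightarrow> real) \<Rightarrow> ('s \<Rightarrow> 's) \<Rightarrow> 'w \<Rightarrow> real" where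
  "L0_opnorm M nrm T = (SOME g. is_L0_inf M
      {\<zeta> \<in> L0_plus M. \<forall>x. AE \<omega> in M. nrm (T x) \<omega> \<le> \<zeta> \<omega> * nrm x \<omega>} g)"

definition shifted_op ::
  "(('w \<Rightarrow> 'k::real_normed_field) \<Rightarrow> 's::ab_group_add \<Rightarrow> 's) \<Rightarrow> ('w \<Rightarrow> 'k) \<Rightarrow> ('s \<Rightarrow> 's) \<Rightarrow> 's \<Rightarrow> 's" where
  "shifted_op sm \<xi> A = (\<lambda>x. sm \<xi> x - A x)"

definition resolvent ::
  "(('w \<Rightarrow> 'k::real_normed_field) \<Rightarrow> 's::ab_group_add \<Rightarrow> 's) \<Rightarrow> 's set \<Rightarrow> ('s \<Rightarrow> 's)
     \<Rightarrow> ('w \<Rightarrow> 'k) \<Rightarrow> 's \<Rightarrow> 's" where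
  "resolvent sm D A \<xi> = the_inv_into D (shifted_op sm \<xi> A)"

definition resolvent_set ::
  "'w measure \<Rightarrow> (('w \<Rightarrow> 'k::real_normed_field) \<Rightarrow> 's::ab_group_add \<Rightarrow> 's)
     \<Rightarrow> ('s \<Rightarrow> 'w \<Rightarrow> real) \<Rightarrow> 's set \<Rightarrow> ('s \<Rightarrow> 's) \<Rightarrow> ('w \<Rightarrow> 'k) set" where
  "resolvent_set M sm nrm D A = {\<xi> \<in> L0 M.
      bij_betw (shifted_op sm \<xi> A) D UNIV \<and> in_BS M sm nrm (resolvent sm D A \<xi>)}"

end

theory Submission
  imports Defs
begin

(*
  For fixed \<mu> \<in> L0_++ the Pazy norm |x|_\<mu> = sup_n \<parallel>\<mu>^n R(\<mu>)^n x\<parallel> lies between \<parallel>x\<parallel> and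
  M\<parallel>x\<parallel>, and \<mu>R(\<mu>) does not increase it.  For \<nu> \<le> \<mu> the resolvent identity writes \<nu>R(\<nu>)x
  as the convex combination (\<nu>/\<mu>) \<mu>R(\<mu>)x + ((\<mu> - \<nu>)/\<mu>) \<mu>R(\<mu>)\<nu>R(\<nu>)x, so \<nu>R(\<nu>) does not
  increase |.|_\<mu> either, and consequently |.|_\<mu> increases with \<mu>.  The new norm is the
  essential supremum of |x|_\<mu> over all \<mu> \<in> L0_++: the family is upward directed and bounded
  by M\<parallel>x\<parallel>, so its supremum is attained along a countable increasing sequence.

  The hypothesis bounds the L0 operator norm of \<mu>^n R(\<mu>)^n, and this controls the operator
  because a continuous module homomorphism of an RN module is a.s. bounded (Guo): the image of
  the unit ball is directed, and continuity at 0 keeps its essential supremum finite.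
*)

section \<open>Convergence in probability\<close>

definition tendsto_zero_in_prob :: "'w measure \<Rightarrow> (nat \<Rightarrow> 'w \<Rightarrow> real) \<Rightarrow> bool" where
  "tendsto_zero_in_prob M f \<longleftrightarrow>
     (\<forall>\<epsilon>>0. (\<lambda>n. measure M {\<omega> \<in> space M. f n \<omega> \<ge> \<epsilon>}) \<longlonglongrightarrow> 0)"

lemma eps_lambda_conv_iff_tendsto_zero_in_prob:
  "eps_lambda_conv M nrm xs x \<longleftrightarrow> tendsto_zero_in_prob M (\<lambda>n. nrm (xs n - x))"
  by (simp add: eps_lambda_conv_def tendsto_zero_in_prob_def)

lemma (in prob_space) measure_ge_nat_tendsto_0:
  assumes [measurable]: "c \<in> borel_measurable M"
  shows "(\<lambda>k. measure M {\<omega> \<in> space M. real k \<le> c \<omega>}) \<longlonglongrightarrow> 0"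
proof -
  define A where "A k = {\<omega> \<in> space M. real k \<le> c \<omega>}" for k
  have "A k \<in> sets M" for k unfolding A_def by measurable
  then have "range A \<subseteq> sets M" by auto
  moreover have "decseq A" unfolding A_def by (intro decseq_SucI) auto
  moreover have "(\<Inter>k. A k) = {}"
    using reals_Archimedean2 by (fastforce simp: A_def not_le[symmetric])
  ultimately show ?thesis
    using finite_Lim_measure_decseq[of A] unfolding A_def by simp
qed

lemma (in prob_space) measure_ge_mult_le:
  fixes c f g :: "'a \<Rightarrow> real"
  assumes [measurable]: "c \<in> borel_measurable M" "f \<in> borel_measurable M" "g \<in> borel_measurable M"
    and le: "AE \<omega> in M. g \<omega> \<le> c \<omega> * f \<omega> \<and> 0 \<le> f \<omega>" and "0 < K"
  shows "measure M {\<omega> \<in> space M. \<epsilon> \<le> g \<omega>} \<le>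
    measure M {\<omega> \<in> space M. K \<le> c \<omega>} + measure M {\<omega> \<in> space M. \<epsilon> / K \<le> f \<omega>}"
proof -
  have "measure M {\<omega> \<in> space M. \<epsilon> \<le> g \<omega>} \<le>
      measure M ({\<omega> \<in> space M. K \<le> c \<omega>} \<union> {\<omega> \<in> space M. \<epsilon> / K \<le> f \<omega>})"
  proof (rule finite_measure_mono_AE)
    show "AE \<omega> in M. \<omega> \<in> {\<omega> \<in> space M. \<epsilon> \<le> g \<omega>} \<longrightarrow>
        \<omega> \<in> {\<omega> \<in> space M. K \<le> c \<omega>} \<union> {\<omega> \<in> space M. \<epsilon> / K \<le> f \<omega>}"
      using le
    proof eventually_elim
      case (elim \<omega>)
      have "c \<omega> * f \<omega> < \<epsilon>" if "c \<omega> < K" "f \<omega> < \<epsilon> / K"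
      proof -
        have "c \<omega> * f \<omega> \<le> K * f \<omega>" using that elim by (intro mult_right_mono) auto
        also have "\<dots> < \<epsilon>" using that \<open>0 < K\<close> by (simp add: field_simps)
        finally show ?thesis .
      qed
      then show ?case using elim by force
    qed
  qed measurable
  also have "\<dots> \<le> measure M {\<omega> \<in> space M. K \<le> c \<omega>} + measure M {\<omega> \<in> space M. \<epsilon> / K \<le> f \<omega>}"
    by (intro measure_Un_le) measurable
  finally show ?thesis .
qed

lemma (in prob_space) tendsto_zero_in_prob_dominated:
  assumes c_meas[measurable]: "c \<in> borel_measurable M"
    and f_meas[measurable]: "\<And>n. f n \<in> borel_measurable M"
    and g_meas[measurable]: "\<And>n. g n \<in> borel_measurable M"
    and f: "tendsto_zero_in_prob M f"
    and le: "\<And>n. AE \<omega> in M. g n \<omega> \<le> c \<omega> * f n \<omega> \<and> 0 \<le> f n \<omega>"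
  shows "tendsto_zero_in_prob M g"
  unfolding tendsto_zero_in_prob_def
proof (intro allI impI LIMSEQ_I)
  fix \<epsilon> r :: real assume "0 < \<epsilon>" "0 < r"
  obtain k where k: "measure M {\<omega> \<in> space M. real (Suc k) \<le> c \<omega>} < r / 2"
    using LIMSEQ_D[OF LIMSEQ_Suc[OF measure_ge_nat_tendsto_0], of c "r / 2"] \<open>0 < r\<close> by auto
  have K: "0 < real (Suc k)" by simp
  with \<open>0 < \<epsilon>\<close> have "(\<lambda>n. measure M {\<omega> \<in> space M. \<epsilon> / real (Suc k) \<le> f n \<omega>}) \<longlonglongrightarrow> 0"
    using f unfolding tendsto_zero_in_prob_def by simp
  from LIMSEQ_D[OF this, of "r / 2"] \<open>0 < r\<close> obtain N
    where N: "\<And>n. n \<ge> N \<Longrightarrow> measure M {\<omega> \<in> space M. \<epsilon> / real (Suc k) \<le> f n \<omega>} < r / 2"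
    by auto
  have "measure M {\<omega> \<in> space M. \<epsilon> \<le> g n \<omega>} < r" if "n \<ge> N" for n
    using measure_ge_mult_le[OF c_meas f_meas[of n] g_meas[of n] le[of n] K, of \<epsilon>] k N[OF that]
    by linarith
  then show "\<exists>N. \<forall>n\<ge>N. norm (measure M {\<omega> \<in> space M. \<epsilon> \<le> g n \<omega>} - 0) < r"
    by auto
qed

lemma (in prob_space) tendsto_zero_in_prob_AE_bounded:
  assumes g: "\<And>n. AE \<omega> in M. g n \<omega> \<le> a n" and a: "a \<longlonglongrightarrow> 0"
    and [measurable]: "\<And>n. g n \<in> borel_measurable M"
  shows "tendsto_zero_in_prob M g"
  unfolding tendsto_zero_in_prob_def
proof (intro allI impI tendsto_eventually)
  fix \<epsilon> :: real assume "0 < \<epsilon>"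
  then have "eventually (\<lambda>n. a n < \<epsilon>) sequentially"
    using order_tendstoD(2)[OF a] by simp
  then show "eventually (\<lambda>n. measure M {\<omega> \<in> space M. \<epsilon> \<le> g n \<omega>} = 0) sequentially"
  proof eventually_elim
    case (elim n)
    have "AE \<omega> in M. \<omega> \<notin> {\<omega> \<in> space M. \<epsilon> \<le> g n \<omega>}"
      using g[of n] by eventually_elim (use elim in auto)
    then show ?case by (intro prob_eq_0[THEN iffD2]) auto
  qed
qed

lemma (in prob_space) measure_gt_incseq_tendsto:
  fixes fs :: "nat \<Rightarrow> 'a \<Rightarrow> real"
  assumes [measurable]: "\<And>k. fs k \<in> borel_measurable M"
    and incseq: "AE \<omega> in M. incseq (\<lambda>k. fs k \<omega>)"
  shows "(\<lambda>j. measure M {\<omega> \<in> space M. c < fs j \<omega>}) \<longlonglongrightarrow>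
    measure M {\<omega> \<in> space M. \<exists>k. c < fs k \<omega>}"
proof -
  define V where "V j = (\<Union>i\<le>j. {\<omega> \<in> space M. c < fs i \<omega>})" for j
  have "{\<omega> \<in> space M. c < fs i \<omega>} \<in> sets M" for i by measurable
  then have V_sets: "V j \<in> sets M" for j unfolding V_def by (auto intro!: sets.finite_UN)
  have "incseq V" unfolding V_def incseq_def by (auto intro: le_trans)
  then have "(\<lambda>j. measure M (V j)) \<longlonglongrightarrow> measure M (\<Union>j. V j)"
    using V_sets by (intro finite_Lim_measure_incseq) auto
  moreover have "(\<Union>j. V j) = {\<omega> \<in> space M. \<exists>k. c < fs k \<omega>}" by (auto simp: V_def)
  moreover have "measure M (V j) = measure M {\<omega> \<in> space M. c < fs j \<omega>}" for j
  proof (rule measure_eq_AE)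
    show "AE \<omega> in M. (\<omega> \<in> V j) = (\<omega> \<in> {\<omega> \<in> space M. c < fs j \<omega>})"
      using incseq by eventually_elim (auto simp: V_def incseq_def intro: less_le_trans)
  qed (simp_all add: V_sets)
  ultimately show ?thesis by simp
qed

text \<open>Boundedness in probability of the sequence is expressed by the null convergence of its
  subsequences damped by 1/(m+1).\<close>
lemma (in prob_space) AE_bdd_above_incseq:
  fixes fs :: "nat \<Rightarrow> 'a \<Rightarrow> real"
  assumes [measurable]: "\<And>k. fs k \<in> borel_measurable M"
    and incseq: "AE \<omega> in M. incseq (\<lambda>k. fs k \<omega>)"
    and bounded: "\<And>J. tendsto_zero_in_prob M (\<lambda>m \<omega>. fs (J m) \<omega> / real (Suc m))"
  shows "AE \<omega> in M. bdd_above (range (\<lambda>k. fs k \<omega>))"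
proof -
  define U where "U = {\<omega> \<in> space M. \<forall>m::nat. \<exists>k. real m < fs k \<omega>}"
  have U_sets: "U \<in> sets M" unfolding U_def by measurable
  have "measure M U = 0"
  proof (rule ccontr)
    assume "measure M U \<noteq> 0"
    then have p: "0 < measure M U" using measure_nonneg[of M U] by linarith
    have "\<exists>j. measure M U / 2 < measure M {\<omega> \<in> space M. real (Suc m) < fs j \<omega>}" for m
    proof -
      have "measure M U \<le> measure M {\<omega> \<in> space M. \<exists>k. real (Suc m) < fs k \<omega>}"
        by (intro finite_measure_mono) (auto simp: U_def simp del: of_nat_Suc)
      then have "measure M U / 2 < measure M {\<omega> \<in> space M. \<exists>k. real (Suc m) < fs k \<omega>}"
        using p by linarith
      from order_tendstoD(1)[OF measure_gt_incseq_tendsto[OF _ incseq] this]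
      show ?thesis by (auto simp: eventually_sequentially)
    qed
    then obtain J where J: "\<And>m. measure M U / 2 < measure M {\<omega> \<in> space M. real (Suc m) < fs (J m) \<omega>}"
      by metis
    have "measure M {\<omega> \<in> space M. real (Suc m) < fs (J m) \<omega>} \<le>
        measure M {\<omega> \<in> space M. 1 \<le> fs (J m) \<omega> / real (Suc m)}" for m
      by (intro finite_measure_mono) (auto simp: field_simps)
    with J have large: "measure M U / 2 < measure M {\<omega> \<in> space M. 1 \<le> fs (J m) \<omega> / real (Suc m)}"
      for m using less_le_trans by blast
    have "(\<lambda>m. measure M {\<omega> \<in> space M. 1 \<le> fs (J m) \<omega> / real (Suc m)}) \<longlonglongrightarrow> 0"
      using bounded[of J] zero_less_one unfolding tendsto_zero_in_prob_def by blast
    then have "eventually (\<lambda>m. measure M {\<omega> \<in> space M. 1 \<le> fs (J m) \<omega> / real (Suc m)}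
        < measure M U / 2) sequentially"
      using p by (intro order_tendstoD(2)) auto
    then show False using large by (auto simp: eventually_sequentially dest: less_asym)
  qed
  then have "AE \<omega> in M. \<omega> \<notin> U" using U_sets by (simp add: prob_eq_0)
  then show ?thesis
    using AE_space by eventually_elim (auto simp: U_def not_less intro: bdd_aboveI2)
qed

section \<open>Essential suprema of directed families\<close>

lemma cSUP_mult_left_nonneg:
  fixes f :: "'a \<Rightarrow> real"
  assumes "I \<noteq> {}" and bdd: "bdd_above (f ` I)" and "0 \<le> c"
  shows "(SUP i\<in>I. c * f i) = c * (SUP i\<in>I. f i)"
proof (cases "c = 0")
  case True
  then show ?thesis using \<open>I \<noteq> {}\<close> by simp
next
  case False
  with \<open>0 \<le> c\<close> have c: "0 < c" by simp
  have upper: "f i \<le> (SUP i\<in>I. f i)" if "i \<in> I" for i using that bdd by (rule cSUP_upper)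
  have bdd_c: "bdd_above ((\<lambda>i. c * f i) ` I)"
    using upper c by (intro bdd_aboveI2[where M = "c * (SUP i\<in>I. f i)"]) simp
  show ?thesis
  proof (rule antisym)
    show "(SUP i\<in>I. c * f i) \<le> c * (SUP i\<in>I. f i)"
      using \<open>I \<noteq> {}\<close> upper c by (intro cSUP_least) simp_all
    have "(SUP i\<in>I. f i) \<le> (SUP i\<in>I. c * f i) / c"
      using \<open>I \<noteq> {}\<close> c cSUP_upper[OF _ bdd_c] by (intro cSUP_least) (simp_all add: le_divide_eq mult.commute)
    then show "c * (SUP i\<in>I. f i) \<le> (SUP i\<in>I. c * f i)"
      using c by (simp add: le_divide_eq mult.commute)
  qed
qed

lemma borel_measurable_cSUP_real[measurable]:
  fixes F :: "nat \<Rightarrow> 'w \<Rightarrow> real"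
  assumes [measurable]: "\<And>i. F i \<in> borel_measurable M"
  shows "(\<lambda>x. SUP i. F i x) \<in> borel_measurable M"
proof -
  have "(SUP i. F i x) = - (INF i. - F i x)" for x
    unfolding Inf_real_def by (simp add: image_image)
  then show ?thesis by simp
qed

definition AE_upward_directed :: "'w measure \<Rightarrow> ('w \<Rightarrow> real) set \<Rightarrow> bool" where
  "AE_upward_directed M F \<longleftrightarrow> (\<forall>f\<in>F. \<forall>g\<in>F. \<exists>h\<in>F. AE \<omega> in M. f \<omega> \<le> h \<omega> \<and> g \<omega> \<le> h \<omega>)"

lemma AE_upward_directed_incseq_dominating:
  assumes dir: "AE_upward_directed M F" and g: "\<And>k. g k \<in> F"
  obtains fs where "\<And>k. fs k \<in> F" "AE \<omega> in M. incseq (\<lambda>k. fs k \<omega>)"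
    "\<And>k. AE \<omega> in M. g k \<omega> \<le> fs k \<omega>"
proof -
  define ub where "ub f h = (SOME u. u \<in> F \<and> (AE \<omega> in M. f \<omega> \<le> u \<omega> \<and> h \<omega> \<le> u \<omega>))" for f h
  have ub: "ub f h \<in> F \<and> (AE \<omega> in M. f \<omega> \<le> ub f h \<omega> \<and> h \<omega> \<le> ub f h \<omega>)"
    if "f \<in> F" "h \<in> F" for f h
    using dir[unfolded AE_upward_directed_def, rule_format, OF that]
    unfolding ub_def Bex_def by (rule someI_ex)
  define fs where "fs = rec_nat (g 0) (\<lambda>k f. ub f (g (Suc k)))"
  have fs_simps: "fs 0 = g 0" "fs (Suc k) = ub (fs k) (g (Suc k))" for k
    by (simp_all add: fs_def)
  have fs_F: "fs k \<in> F" for k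
    by (induction k) (simp_all add: fs_simps g ub)
  have "AE \<omega> in M. \<forall>k. fs k \<omega> \<le> fs (Suc k) \<omega>"
    unfolding AE_all_countable using ub[OF fs_F g] by (auto simp: fs_simps)
  then have incseq: "AE \<omega> in M. incseq (\<lambda>k. fs k \<omega>)"
    by eventually_elim (simp add: incseq_Suc_iff)
  have g_le: "AE \<omega> in M. g k \<omega> \<le> fs k \<omega>" for k
    using ub[OF fs_F g] by (cases k) (auto simp: fs_simps)
  show ?thesis using fs_F incseq g_le by (rule that)
qed

lemma AE_le_of_integral_max_le:
  fixes u v :: "'w \<Rightarrow> real"
  assumes [simp]: "integrable M u" "integrable M v"
    and le: "(\<integral>\<omega>. max (u \<omega>) (v \<omega>) \<partial>M) \<le> (\<integral>\<omega>. v \<omega> \<partial>M)"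
  shows "AE \<omega> in M. u \<omega> \<le> v \<omega>"
proof -
  have "(\<integral>\<omega>. max (u \<omega>) (v \<omega>) - v \<omega> \<partial>M) = 0"
    using le integral_mono[of M v "\<lambda>\<omega>. max (u \<omega>) (v \<omega>)"] by simp
  then have "AE \<omega> in M. max (u \<omega>) (v \<omega>) - v \<omega> = 0"
    by (subst (asm) integral_nonneg_eq_0_iff_AE) auto
  then show ?thesis by eventually_elim (simp add: max_def split: if_splits)
qed

lemma abs_arctan_le: "\<bar>arctan y\<bar> \<le> pi / 2"
  using arctan_lbound[of y] arctan_ubound[of y] by linarith

lemma bdd_above_arctan: "bdd_above (range (\<lambda>k. arctan (f k)))"
  by (intro bdd_aboveI2[where M = "pi / 2"] less_imp_le[OF arctan_ubound])

lemma arctan_le_SUP_arctan: "arctan (f k) \<le> (SUP k. arctan (f k))"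
  by (rule cSUP_upper[OF _ bdd_above_arctan]) simp

lemma abs_SUP_arctan_le:
  fixes f :: "nat \<Rightarrow> real"
  shows "\<bar>SUP k. arctan (f k)\<bar> \<le> pi / 2"
proof -
  have "- (pi / 2) \<le> (SUP k. arctan (f k))"
    using arctan_lbound[of "f 0"] arctan_le_SUP_arctan[of f 0] by linarith
  moreover have "(SUP k. arctan (f k)) \<le> pi / 2"
    by (intro cSUP_least less_imp_le[OF arctan_ubound]) simp
  ultimately show ?thesis unfolding abs_le_iff by linarith
qed

definition arctan_integral :: "'a measure \<Rightarrow> ('a \<Rightarrow> real) \<Rightarrow> real" where
  "arctan_integral M f = (\<integral>\<omega>. arctan (f \<omega>) \<partial>M)"

lemma (in finite_measure) integrable_arctan[simp]:
  assumes [measurable]: "f \<in> borel_measurable M"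
  shows "integrable M (\<lambda>\<omega>. arctan (f \<omega>))"
  by (intro integrable_const_bound[where B = "pi / 2"] AE_I2)
    (simp_all only: real_norm_def abs_arctan_le, measurable)

lemma (in finite_measure) integrable_SUP_arctan[simp]:
  fixes fs :: "nat \<Rightarrow> 'a \<Rightarrow> real"
  assumes [measurable]: "\<And>k. fs k \<in> borel_measurable M"
  shows "integrable M (\<lambda>\<omega>. SUP k. arctan (fs k \<omega>))"
  by (intro integrable_const_bound[where B = "pi / 2"] AE_I2)
    (simp_all only: real_norm_def abs_SUP_arctan_le, measurable)

lemma (in prob_space) arctan_integral_le:
  assumes "f \<in> borel_measurable M"
  shows "arctan_integral M f \<le> pi / 2"
proof -
  have "arctan_integral M f \<le> (\<integral>\<omega>. pi / 2 \<partial>M)"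
    unfolding arctan_integral_def using assms
    by (intro integral_mono less_imp_le[OF arctan_ubound]) auto
  then show ?thesis by (simp add: prob_space)
qed

lemma (in finite_measure) arctan_integral_mono_AE:
  assumes "f \<in> borel_measurable M" "h \<in> borel_measurable M" and "AE \<omega> in M. f \<omega> \<le> h \<omega>"
  shows "arctan_integral M f \<le> arctan_integral M h"
proof -
  have "AE \<omega> in M. arctan (f \<omega>) \<le> arctan (h \<omega>)"
    using assms(3) by eventually_elim (simp add: arctan_le_iff)
  then show ?thesis unfolding arctan_integral_def using assms(1,2) by (intro integral_mono_AE) auto
qed

lemma (in prob_space) AE_upward_directed_approx_SUP_arctan_integral:
  assumes F_meas: "F \<subseteq> borel_measurable M" and "F \<noteq> {}" and dir: "AE_upward_directed M F"
  obtains fs where "\<And>k. fs k \<in> F" "AE \<omega> in M. incseq (\<lambda>k. fs k \<omega>)"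
    "\<And>k. (SUP f\<in>F. arctan_integral M f) - 1 / Suc k < arctan_integral M (fs k)"
proof -
  let ?s = "SUP f\<in>F. arctan_integral M f"
  have bdd: "bdd_above (arctan_integral M ` F)"
    using arctan_integral_le F_meas by (intro bdd_aboveI2[where M = "pi / 2"]) blast
  have "\<exists>g\<in>F. ?s - 1 / Suc k < arctan_integral M g" for k
  proof -
    have "?s - 1 / Suc k < ?s" by simp
    then show ?thesis by (simp only: less_cSUP_iff[OF \<open>F \<noteq> {}\<close> bdd])
  qed
  then obtain g where g: "\<And>k. g k \<in> F" "\<And>k. ?s - 1 / Suc k < arctan_integral M (g k)"
    by metis
  obtain fs where fs_F: "\<And>k. fs k \<in> F" and incseq: "AE \<omega> in M. incseq (\<lambda>k. fs k \<omega>)"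
    and g_le: "\<And>k. AE \<omega> in M. g k \<omega> \<le> fs k \<omega>"
    using AE_upward_directed_incseq_dominating[OF dir, of g] g(1) by blast
  have "?s - 1 / Suc k < arctan_integral M (fs k)" for k
    using g(2)[of k] arctan_integral_mono_AE[OF _ _ g_le[of k]] g(1)[of k] fs_F[of k] F_meas
    by fastforce
  with fs_F incseq show ?thesis by (rule that)
qed

lemma (in prob_space) AE_arctan_le_SUP_arctan:
  assumes F_meas: "F \<subseteq> borel_measurable M" and dir: "AE_upward_directed M F"
    and fs_F: "\<And>k. fs k \<in> F" and incseq: "AE \<omega> in M. incseq (\<lambda>k. fs k \<omega>)"
    and le: "(SUP f\<in>F. arctan_integral M f) \<le> (\<integral>\<omega>. (SUP k. arctan (fs k \<omega>)) \<partial>M)"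
    and f: "f \<in> F"
  shows "AE \<omega> in M. arctan (f \<omega>) \<le> (SUP k. arctan (fs k \<omega>))"
proof (rule AE_le_of_integral_max_le)
  have [measurable]: "f \<in> borel_measurable M" "fs k \<in> borel_measurable M" for k
    using f fs_F F_meas by auto
  define L where "L \<omega> = (SUP k. arctan (fs k \<omega>))" for \<omega>
  have [measurable]: "L \<in> borel_measurable M" unfolding L_def by measurable
  show int_L: "integrable M L" unfolding L_def[abs_def] by simp
  define G where "G k = (\<lambda>\<omega>. max (arctan (f \<omega>)) (arctan (fs k \<omega>)))" for k
  have [measurable]: "G k \<in> borel_measurable M" for k unfolding G_def by measurable
  have "(\<lambda>k. integral\<^sup>L M (G k)) \<longlonglongrightarrow> (\<integral>\<omega>. max (arctan (f \<omega>)) (L \<omega>) \<partial>M)"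
  proof (rule integral_dominated_convergence[where w = "\<lambda>_. pi / 2"])
    show "AE \<omega> in M. (\<lambda>k. G k \<omega>) \<longlonglongrightarrow> max (arctan (f \<omega>)) (L \<omega>)"
      using incseq by eventually_elim (auto simp: G_def L_def incseq_def arctan_le_iff
          intro!: tendsto_max LIMSEQ_incseq_SUP bdd_above_arctan)
    show "AE \<omega> in M. norm (G k \<omega>) \<le> pi / 2" for k
      using abs_arctan_le by (intro AE_I2) (simp add: G_def max_def)
  qed simp_all
  moreover have "integral\<^sup>L M (G k) \<le> (SUP f\<in>F. arctan_integral M f)" for k
  proof -
    obtain h where h: "h \<in> F" "AE \<omega> in M. f \<omega> \<le> h \<omega> \<and> fs k \<omega> \<le> h \<omega>"
      using dir[unfolded AE_upward_directed_def, rule_format, OF f fs_F] by blast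
    have "AE \<omega> in M. G k \<omega> \<le> arctan (h \<omega>)"
      using h(2) by eventually_elim (simp add: G_def arctan_le_iff)
    then have "integral\<^sup>L M (G k) \<le> arctan_integral M h"
      unfolding arctan_integral_def using h(1) F_meas by (intro integral_mono_AE) (auto simp: G_def)
    also have "\<dots> \<le> (SUP f\<in>F. arctan_integral M f)"
      using arctan_integral_le F_meas h(1)
      by (intro cSUP_upper bdd_aboveI2[where M = "pi / 2"]) blast+
    finally show ?thesis .
  qed
  ultimately show "(\<integral>\<omega>. max (arctan (f \<omega>)) (L \<omega>) \<partial>M) \<le> integral\<^sup>L M L"
    using le unfolding L_def[symmetric] by (intro LIMSEQ_le_const2) (auto intro: order_trans)
qed (use f F_meas in auto)

text \<open>Composing with the bounded increasing function arctan turns the family into one with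
  bounded integrals; a sequence whose integrals approach their supremum is then cofinal.\<close>
lemma (in prob_space) AE_upward_directed_cofinal_incseq:
  assumes F_meas: "F \<subseteq> borel_measurable M" and "F \<noteq> {}" and dir: "AE_upward_directed M F"
  obtains fs where "\<And>k. fs k \<in> F" "AE \<omega> in M. incseq (\<lambda>k. fs k \<omega>)"
    "\<And>f. f \<in> F \<Longrightarrow> AE \<omega> in M. \<forall>c. (\<forall>k. fs k \<omega> \<le> c) \<longrightarrow> f \<omega> \<le> c"
proof -
  obtain fs where fs_F: "\<And>k. fs k \<in> F" and incseq: "AE \<omega> in M. incseq (\<lambda>k. fs k \<omega>)"
    and approx: "\<And>k. (SUP f\<in>F. arctan_integral M f) - 1 / Suc k < arctan_integral M (fs k)"
    using AE_upward_directed_approx_SUP_arctan_integral[OF assms] by blast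
  have [measurable]: "fs k \<in> borel_measurable M" for k using fs_F F_meas by auto
  define L where "L \<omega> = (SUP k. arctan (fs k \<omega>))" for \<omega>
  have "(SUP f\<in>F. arctan_integral M f) \<le> integral\<^sup>L M L"
  proof (rule field_le_epsilon)
    fix e :: real assume "0 < e"
    then obtain k where "1 / Suc k < e" using nat_approx_posE by blast
    moreover have "arctan_integral M (fs k) \<le> integral\<^sup>L M L"
      unfolding arctan_integral_def L_def[abs_def]
      by (intro integral_mono arctan_le_SUP_arctan) simp_all
    ultimately show "(SUP f\<in>F. arctan_integral M f) \<le> integral\<^sup>L M L + e"
      using approx[of k] by linarith
  qed
  then have arctan_le_L: "AE \<omega> in M. arctan (f \<omega>) \<le> L \<omega>" if "f \<in> F" for f
    unfolding L_def by (rule AE_arctan_le_SUP_arctan[OF F_meas dir fs_F incseq _ that])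
  have L_le: "L \<omega> \<le> arctan c" if "\<forall>k. fs k \<omega> \<le> c" for \<omega> c
    unfolding L_def using that by (intro cSUP_least) (auto simp: arctan_le_iff)
  have "AE \<omega> in M. \<forall>c. (\<forall>k. fs k \<omega> \<le> c) \<longrightarrow> f \<omega> \<le> c" if "f \<in> F" for f
    using arctan_le_L[OF that] by eventually_elim (meson L_le arctan_le_iff order_trans)
  with fs_F incseq show ?thesis by (rule that)
qed

definition is_L0_sup :: "'w measure \<Rightarrow> ('w \<Rightarrow> real) set \<Rightarrow> ('w \<Rightarrow> real) \<Rightarrow> bool" where
  "is_L0_sup M F g \<longleftrightarrow> g \<in> borel_measurable M \<and>
     (\<forall>f\<in>F. AE \<omega> in M. f \<omega> \<le> g \<omega>) \<and>
     (\<forall>h\<in>borel_measurable M. (\<forall>f\<in>F. AE \<omega> in M. f \<omega> \<le> h \<omega>) \<longrightarrow> (AE \<omega> in M. g \<omega> \<le> h \<omega>))"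

lemma (in prob_space) L0_sup_exists:
  assumes "F \<subseteq> borel_measurable M" "F \<noteq> {}" "AE_upward_directed M F"
    and bound: "\<And>f. f \<in> F \<Longrightarrow> AE \<omega> in M. f \<omega> \<le> B \<omega>"
  shows "\<exists>g. is_L0_sup M F g"
proof -
  obtain fs where fs_F: "\<And>k. fs k \<in> F" and "AE \<omega> in M. incseq (\<lambda>k. fs k \<omega>)"
    and cofinal: "\<And>f. f \<in> F \<Longrightarrow> AE \<omega> in M. \<forall>c. (\<forall>k. fs k \<omega> \<le> c) \<longrightarrow> f \<omega> \<le> c"
    using AE_upward_directed_cofinal_incseq[OF assms(1-3)] by blast
  have [measurable]: "fs k \<in> borel_measurable M" for k using fs_F assms(1) by auto
  define g where "g \<omega> = (SUP k. fs k \<omega>)" for \<omega>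
  have "AE \<omega> in M. \<forall>k. fs k \<omega> \<le> B \<omega>"
    unfolding AE_all_countable using bound[OF fs_F] by blast
  then have "AE \<omega> in M. \<forall>k. fs k \<omega> \<le> g \<omega>"
    by eventually_elim (auto simp: g_def intro!: cSUP_upper bdd_aboveI2)
  then have "AE \<omega> in M. f \<omega> \<le> g \<omega>" if "f \<in> F" for f
    using cofinal[OF that] by eventually_elim blast
  moreover have "AE \<omega> in M. g \<omega> \<le> h \<omega>" if "\<forall>f\<in>F. AE \<omega> in M. f \<omega> \<le> h \<omega>" for h
  proof -
    have "AE \<omega> in M. \<forall>k. fs k \<omega> \<le> h \<omega>"
      unfolding AE_all_countable using that fs_F by blast
    then show ?thesis by eventually_elim (auto simp: g_def intro: cSUP_least)
  qed
  moreover have "g \<in> borel_measurable M" unfolding g_def by measurable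
  ultimately show ?thesis unfolding is_L0_sup_def by blast
qed

lemma is_L0_inf_if_is_L0_sup_uminus:
  assumes g: "is_L0_sup M ((\<lambda>f \<omega>. - f \<omega>) ` F) g"
  shows "is_L0_inf M F (\<lambda>\<omega>. - g \<omega>)"
  unfolding is_L0_inf_def
proof (intro conjI ballI impI)
  show "(\<lambda>\<omega>. - g \<omega>) \<in> borel_measurable M" using g by (simp add: is_L0_sup_def)
next
  fix f assume "f \<in> F"
  then have "AE \<omega> in M. - f \<omega> \<le> g \<omega>" using g by (auto simp: is_L0_sup_def)
  then show "AE \<omega> in M. - g \<omega> \<le> f \<omega>" by eventually_elim simp
next
  fix h :: "'a \<Rightarrow> real"
  assume "h \<in> borel_measurable M" and h_le: "\<forall>f\<in>F. AE \<omega> in M. h \<omega> \<le> f \<omega>"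
  have "\<forall>f\<in>(\<lambda>f \<omega>. - f \<omega>) ` F. AE \<omega> in M. f \<omega> \<le> - h \<omega>"
    using h_le by (auto elim: eventually_mono)
  then have "AE \<omega> in M. g \<omega> \<le> - h \<omega>"
    using g \<open>h \<in> borel_measurable M\<close> unfolding is_L0_sup_def by auto
  then show "AE \<omega> in M. h \<omega> \<le> - g \<omega>" by eventually_elim simp
qed

lemma (in prob_space) L0_inf_exists:
  assumes F_meas: "F \<subseteq> borel_measurable M" and "F \<noteq> {}"
    and dir: "\<forall>f\<in>F. \<forall>g\<in>F. \<exists>h\<in>F. AE \<omega> in M. h \<omega> \<le> f \<omega> \<and> h \<omega> \<le> g \<omega>"
    and bound: "\<And>f. f \<in> F \<Longrightarrow> AE \<omega> in M. B \<omega> \<le> f \<omega>"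
  shows "\<exists>g. is_L0_inf M F g"
proof -
  let ?neg = "\<lambda>f \<omega>. - f \<omega> :: real"
  have meas: "?neg ` F \<subseteq> borel_measurable M" using F_meas by auto
  have dir': "AE_upward_directed M (?neg ` F)"
    unfolding AE_upward_directed_def
  proof (intro ballI)
    fix f g assume "f \<in> ?neg ` F" "g \<in> ?neg ` F"
    then obtain f' g' where "f' \<in> F" "g' \<in> F" "f = ?neg f'" "g = ?neg g'" by blast
    moreover obtain h where "h \<in> F" "AE \<omega> in M. h \<omega> \<le> f' \<omega> \<and> h \<omega> \<le> g' \<omega>"
      using dir \<open>f' \<in> F\<close> \<open>g' \<in> F\<close> by blast
    ultimately show "\<exists>h\<in>?neg ` F. AE \<omega> in M. f \<omega> \<le> h \<omega> \<and> g \<omega> \<le> h \<omega>"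
      by (intro bexI[of _ "?neg h"]) auto
  qed
  have bound': "AE \<omega> in M. f \<omega> \<le> - B \<omega>" if "f \<in> ?neg ` F" for f
  proof -
    obtain f' where "f' \<in> F" "f = ?neg f'" using \<open>f \<in> ?neg ` F\<close> by blast
    then show ?thesis using bound[of f'] by (auto elim: eventually_mono)
  qed
  obtain g where "is_L0_sup M (?neg ` F) g"
    using L0_sup_exists[OF meas _ dir' bound'] \<open>F \<noteq> {}\<close> by blast
  then show ?thesis using is_L0_inf_if_is_L0_sup_uminus by blast
qed

section \<open>RN modules\<close>

lemma L0_const[simp]: "(\<lambda>\<omega>. c) \<in> L0 M"
  by (simp add: L0_def)

lemma L0_of_real[intro]: "f \<in> borel_measurable M \<Longrightarrow> (\<lambda>\<omega>. of_real (f \<omega>)) \<in> L0 M"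
  unfolding L0_def by measurable

lemma L0_indicator[intro]: "E \<in> sets M \<Longrightarrow> indicator E \<in> L0 M"
  unfolding L0_def by (rule borel_measurable_indicator)

locale RN_module =
  fixes M :: "'w measure"
    and sm :: "('w \<Rightarrow> 'k::real_normed_field) \<Rightarrow> 's::ab_group_add \<Rightarrow> 's"
    and nrm :: "'s \<Rightarrow> 'w \<Rightarrow> real"
  assumes RN: "is_RN_module M sm nrm"
begin

sublocale prob_space M
  using RN by (simp add: is_RN_module_def)

lemma is_L0_module: "is_L0_module M sm"
  and is_L0_norm: "is_L0_norm M sm nrm"
  using RN by (simp_all add: is_RN_module_def)

lemma scale_cong: "\<xi> \<in> L0 M \<Longrightarrow> \<eta> \<in> L0 M \<Longrightarrow> (AE \<omega> in M. \<xi> \<omega> = \<eta> \<omega>) \<Longrightarrow> sm \<xi> x = sm \<eta> x"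
  using is_L0_module unfolding is_L0_module_def by blast

lemma scale_add_right: "\<xi> \<in> L0 M \<Longrightarrow> sm \<xi> (x + y) = sm \<xi> x + sm \<xi> y"
  using is_L0_module unfolding is_L0_module_def by blast

lemma scale_add_left:
  "\<xi> \<in> L0 M \<Longrightarrow> \<eta> \<in> L0 M \<Longrightarrow> sm (\<lambda>\<omega>. \<xi> \<omega> + \<eta> \<omega>) x = sm \<xi> x + sm \<eta> x"
  using is_L0_module unfolding is_L0_module_def by blast

lemma scale_scale: "\<xi> \<in> L0 M \<Longrightarrow> \<eta> \<in> L0 M \<Longrightarrow> sm \<xi> (sm \<eta> x) = sm (\<lambda>\<omega>. \<xi> \<omega> * \<eta> \<omega>) x"
  using is_L0_module unfolding is_L0_module_def by metis

lemma scale_one: "sm (\<lambda>\<omega>. 1) x = x"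
  using is_L0_module unfolding is_L0_module_def by blast

lemma scale_zero_right: "\<xi> \<in> L0 M \<Longrightarrow> sm \<xi> 0 = 0"
  using scale_add_right[of \<xi> 0 0] by simp

lemma scale_zero_left: "sm (\<lambda>\<omega>. 0) x = 0"
  using scale_add_left[of "\<lambda>\<omega>. 0" "\<lambda>\<omega>. 0" x] by simp

lemma scale_diff_right: "\<xi> \<in> L0 M \<Longrightarrow> sm \<xi> (x - y) = sm \<xi> x - sm \<xi> y"
  using scale_add_right[of \<xi> "x - y" y] by (simp add: eq_diff_eq)

lemma scale_commute: "\<xi> \<in> L0 M \<Longrightarrow> \<eta> \<in> L0 M \<Longrightarrow> sm \<xi> (sm \<eta> x) = sm \<eta> (sm \<xi> x)"
  by (simp add: scale_scale mult.commute)

lemma nrm_measurable[measurable]: "nrm x \<in> borel_measurable M"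
  and nrm_nonneg: "AE \<omega> in M. 0 \<le> nrm x \<omega>"
  using is_L0_norm unfolding is_L0_norm_def L0_plus_def by blast+

lemma nrm_scale: "\<xi> \<in> L0 M \<Longrightarrow> AE \<omega> in M. nrm (sm \<xi> x) \<omega> = norm (\<xi> \<omega>) * nrm x \<omega>"
  using is_L0_norm unfolding is_L0_norm_def by blast

lemma nrm_triangle: "AE \<omega> in M. nrm (x + y) \<omega> \<le> nrm x \<omega> + nrm y \<omega>"
  using is_L0_norm unfolding is_L0_norm_def by blast

lemma nrm_eq_0D: "(AE \<omega> in M. nrm x \<omega> = 0) \<Longrightarrow> x = 0"
  using is_L0_norm unfolding is_L0_norm_def by blast

lemma nrm_zero: "AE \<omega> in M. nrm 0 \<omega> = 0"
  using nrm_scale[of "\<lambda>\<omega>. 0" 0] scale_zero_right[of "\<lambda>\<omega>. 0"] by simp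

lemma nrm_paste:
  assumes E: "E \<in> sets M"
  shows "AE \<omega> in M. nrm (sm (indicator E) a + sm (indicator (space M - E)) b) \<omega> =
           (if \<omega> \<in> E then nrm a \<omega> else nrm b \<omega>)"
proof -
  let ?E = "indicator E :: 'w \<Rightarrow> 'k" and ?E' = "indicator (space M - E) :: 'w \<Rightarrow> 'k"
  let ?z = "sm ?E a + sm ?E' b"
  have L0: "?E \<in> L0 M" "?E' \<in> L0 M" using E by auto
  have "(\<lambda>\<omega>. ?E \<omega> * ?E \<omega>) = ?E" "(\<lambda>\<omega>. ?E' \<omega> * ?E' \<omega>) = ?E'"
    "(\<lambda>\<omega>. ?E \<omega> * ?E' \<omega>) = (\<lambda>_. 0)" "(\<lambda>\<omega>. ?E' \<omega> * ?E \<omega>) = (\<lambda>_. 0)"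
    by (auto simp: indicator_def)
  then have parts: "sm ?E ?z = sm ?E a" "sm ?E' ?z = sm ?E' b"
    using L0 by (simp_all add: scale_add_right scale_scale scale_zero_left)
  show ?thesis
    using nrm_scale[OF L0(1), of ?z] nrm_scale[OF L0(1), of a]
      nrm_scale[OF L0(2), of ?z] nrm_scale[OF L0(2), of b] AE_space
    unfolding parts by eventually_elim (auto simp: indicator_def split: if_splits)
qed

end

lemma
  assumes "is_module_hom M sm UNIV T"
  shows hom_add: "T (x + y) = T x + T y"
    and hom_scale: "\<xi> \<in> L0 M \<Longrightarrow> T (sm \<xi> x) = sm \<xi> (T x)"
  using assms unfolding is_module_hom_def by blast+

lemma hom_zero: "is_module_hom M sm UNIV T \<Longrightarrow> T 0 = 0"
  using hom_add[of M sm T 0 0] by simp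

context RN_module
begin

lemma eps_lambda_conv_scale:
  assumes c: "c \<in> L0 M" and conv: "eps_lambda_conv M nrm xs x"
  shows "eps_lambda_conv M nrm (\<lambda>n. sm c (xs n)) (sm c x)"
  unfolding eps_lambda_conv_iff_tendsto_zero_in_prob
proof (rule tendsto_zero_in_prob_dominated[where c = "\<lambda>\<omega>. norm (c \<omega>)"])
  show "(\<lambda>\<omega>. norm (c \<omega>)) \<in> borel_measurable M" using c unfolding L0_def by measurable
  show "tendsto_zero_in_prob M (\<lambda>n. nrm (xs n - x))"
    using conv by (simp add: eps_lambda_conv_iff_tendsto_zero_in_prob)
  show "AE \<omega> in M. nrm (sm c (xs n) - sm c x) \<omega> \<le> norm (c \<omega>) * nrm (xs n - x) \<omega> \<and>
      0 \<le> nrm (xs n - x) \<omega>" for n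
    using nrm_scale[OF c, of "xs n - x"] nrm_nonneg[of "xs n - x"]
    by eventually_elim (simp add: scale_diff_right[OF c])
qed simp_all

lemma in_BS_scale: "c \<in> L0 M \<Longrightarrow> in_BS M sm nrm (sm c)"
  unfolding in_BS_def is_module_hom_def
  by (simp add: scale_add_right scale_commute eps_lambda_conv_scale)

text \<open>Scaling by a real random variable is a constant of its own, so that the simplifier does not
  split the coercion of_real inside the scalar.\<close>
definition rscale :: "('w \<Rightarrow> real) \<Rightarrow> 's \<Rightarrow> 's" where
  "rscale a = sm (\<lambda>\<omega>. of_real (a \<omega>))"

lemma rscale_one: "rscale (\<lambda>\<omega>. 1) x = x"
  by (simp add: rscale_def scale_one)

context
  fixes a b :: "'w \<Rightarrow> real"
  assumes a[measurable]: "a \<in> borel_measurable M" and b[measurable]: "b \<in> borel_measurable M"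
begin

lemma rscale_rscale: "rscale a (rscale b x) = rscale (\<lambda>\<omega>. a \<omega> * b \<omega>) x"
  using scale_scale[of "\<lambda>\<omega>. of_real (a \<omega>)" "\<lambda>\<omega>. of_real (b \<omega>)" x] by (simp add: rscale_def L0_of_real)

lemma rscale_add_left: "rscale a x + rscale b x = rscale (\<lambda>\<omega>. a \<omega> + b \<omega>) x"
  using scale_add_left[of "\<lambda>\<omega>. of_real (a \<omega>)" "\<lambda>\<omega>. of_real (b \<omega>)" x] by (simp add: rscale_def L0_of_real)

lemma rscale_cong: "(AE \<omega> in M. a \<omega> = b \<omega>) \<Longrightarrow> rscale a x = rscale b x"
  unfolding rscale_def by (rule scale_cong) (auto elim: eventually_mono)

lemma rscale_commute: "rscale a (rscale b x) = rscale b (rscale a x)"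
  unfolding rscale_def by (intro scale_commute L0_of_real a b)


end

lemma rscale_divide_rscale:
  assumes [measurable]: "a \<in> borel_measurable M" "b \<in> borel_measurable M"
    and "AE \<omega> in M. 0 < b \<omega>"
  shows "rscale (\<lambda>\<omega>. a \<omega> / b \<omega>) (rscale b x) = rscale a x"
proof -
  have "rscale (\<lambda>\<omega>. a \<omega> / b \<omega>) (rscale b x) = rscale (\<lambda>\<omega>. a \<omega> / b \<omega> * b \<omega>) x"
    by (rule rscale_rscale; measurable)
  also have "\<dots> = rscale a x"
    using assms(3) by (intro rscale_cong; measurable) (auto elim: eventually_mono)
  finally show ?thesis .
qed

context
  fixes a :: "'w \<Rightarrow> real"
  assumes a[measurable]: "a \<in> borel_measurable M"
begin

lemma rscale_add_right: "rscale a (x + y) = rscale a x + rscale a y"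
  unfolding rscale_def by (intro scale_add_right L0_of_real a)

lemma hom_rscale: "is_module_hom M sm UNIV T \<Longrightarrow> T (rscale a x) = rscale a (T x)"
  unfolding rscale_def by (erule hom_scale) (intro L0_of_real a)

lemma in_BS_rscale: "in_BS M sm nrm (rscale a)"
  unfolding rscale_def by (intro in_BS_scale L0_of_real a)

end

end

lemma in_BS_comp: "in_BS M sm nrm T \<Longrightarrow> in_BS M sm nrm U \<Longrightarrow> in_BS M sm nrm (\<lambda>x. T (U x))"
  unfolding in_BS_def is_module_hom_def by auto

lemma in_BS_funpow: "in_BS M sm nrm T \<Longrightarrow> in_BS M sm nrm (T ^^ n)"
proof (induction n)
  case 0
  then show ?case by (simp add: in_BS_def is_module_hom_def id_def)
next
  case (Suc n)
  then show ?case using in_BS_comp[of M sm nrm T "T ^^ n"] by (simp add: comp_def)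
qed

section \<open>Guo's boundedness theorem and the L0 operator norm\<close>

context RN_module
begin

lemma hom_unit_ball_directed:
  assumes hom: "is_module_hom M sm UNIV T"
  shows "AE_upward_directed M {nrm (T x) | x. AE \<omega> in M. nrm x \<omega> \<le> 1}"
  unfolding AE_upward_directed_def
proof (intro ballI)
  fix f g assume "f \<in> {nrm (T x) | x. AE \<omega> in M. nrm x \<omega> \<le> 1}" "g \<in> {nrm (T x) | x. AE \<omega> in M. nrm x \<omega> \<le> 1}"
  then obtain x y where f: "f = nrm (T x)" and x: "AE \<omega> in M. nrm x \<omega> \<le> 1"
    and g: "g = nrm (T y)" and y: "AE \<omega> in M. nrm y \<omega> \<le> 1"
    by blast
  define E where "E = {\<omega> \<in> space M. nrm (T y) \<omega> \<le> nrm (T x) \<omega>}"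
  have E: "E \<in> sets M" "space M - E \<in> sets M" unfolding E_def by measurable
  define z where "z = sm (indicator E) x + sm (indicator (space M - E)) y"
  have Tz: "T z = sm (indicator E) (T x) + sm (indicator (space M - E)) (T y)"
    using E by (simp add: z_def hom_add[OF hom] hom_scale[OF hom L0_indicator])
  have "AE \<omega> in M. nrm z \<omega> \<le> 1"
    using nrm_paste[OF E(1), of x y] x y unfolding z_def by eventually_elim auto
  moreover have "AE \<omega> in M. f \<omega> \<le> nrm (T z) \<omega> \<and> g \<omega> \<le> nrm (T z) \<omega>"
    using nrm_paste[OF E(1), of "T x" "T y"] AE_space unfolding Tz f g
    by eventually_elim (auto simp: E_def)
  ultimately show "\<exists>h\<in>{nrm (T x) | x. AE \<omega> in M. nrm x \<omega> \<le> 1}.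
      AE \<omega> in M. f \<omega> \<le> h \<omega> \<and> g \<omega> \<le> h \<omega>"
    by blast
qed

lemma hom_nrm_eq_0:
  assumes hom: "is_module_hom M sm UNIV T"
  shows "AE \<omega> in M. nrm x \<omega> = 0 \<longrightarrow> nrm (T x) \<omega> = 0"
proof -
  define E where "E = {\<omega> \<in> space M. nrm x \<omega> = 0}"
  have "E \<in> sets M" unfolding E_def by measurable
  then have E: "indicator E \<in> L0 M" by auto
  have "AE \<omega> in M. nrm (sm (indicator E) x) \<omega> = 0"
    using nrm_scale[OF E, of x] by eventually_elim (auto simp: E_def indicator_def)
  then have Tx: "sm (indicator E) (T x) = 0"
    using hom_scale[OF hom E, of x] hom_zero[OF hom] nrm_eq_0D by metis
  show ?thesis
    using nrm_scale[OF E, of "T x"] nrm_zero AE_space unfolding Tx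
    by eventually_elim (auto simp: E_def indicator_def)
qed

lemma hom_bound_of_unit_ball_bound:
  assumes hom: "is_module_hom M sm UNIV T"
    and ball: "\<And>u. (AE \<omega> in M. nrm u \<omega> \<le> 1) \<Longrightarrow> AE \<omega> in M. nrm (T u) \<omega> \<le> \<zeta> \<omega>"
  shows "AE \<omega> in M. nrm (T x) \<omega> \<le> \<zeta> \<omega> * nrm x \<omega>"
proof -
  define d where "d \<omega> = (if 0 < nrm x \<omega> then 1 / nrm x \<omega> else 0)" for \<omega>
  have "d \<in> borel_measurable M" unfolding d_def by measurable
  then have d: "(\<lambda>\<omega>. of_real (d \<omega>)) \<in> L0 M" by auto
  have "AE \<omega> in M. nrm (sm (\<lambda>\<omega>. of_real (d \<omega>)) x) \<omega> \<le> 1"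
    using nrm_scale[OF d, of x] by eventually_elim (simp add: d_def)
  then have "AE \<omega> in M. nrm (sm (\<lambda>\<omega>. of_real (d \<omega>)) (T x)) \<omega> \<le> \<zeta> \<omega>"
    using ball hom_scale[OF hom d] by metis
  then show ?thesis
    using nrm_scale[OF d, of "T x"] hom_nrm_eq_0[OF hom, of x] nrm_nonneg[of x]
    by eventually_elim (auto simp: d_def field_simps split: if_splits)
qed

lemma in_BS_unit_ball_bounded_in_prob:
  assumes T: "in_BS M sm nrm T" and xs: "\<And>m. AE \<omega> in M. nrm (xs m) \<omega> \<le> 1"
  shows "tendsto_zero_in_prob M (\<lambda>m \<omega>. nrm (T (xs m)) \<omega> / real (Suc m))"
proof -
  have hom: "is_module_hom M sm UNIV T" using T by (simp add: in_BS_def)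
  define c where "c m = (\<lambda>\<omega> :: 'w. of_real (1 / real (Suc m)) :: 'k)" for m
  have c: "c m \<in> L0 M" for m by (simp add: c_def)
  have norm_c: "norm (c m \<omega>) = 1 / real (Suc m)" for m \<omega> unfolding c_def norm_of_real by simp
  have "eps_lambda_conv M nrm (\<lambda>m. sm (c m) (xs m)) 0"
    unfolding eps_lambda_conv_iff_tendsto_zero_in_prob
  proof (rule tendsto_zero_in_prob_AE_bounded)
    show "AE \<omega> in M. nrm (sm (c m) (xs m) - 0) \<omega> \<le> 1 / real (Suc m)" for m
      using nrm_scale[OF c, of m "xs m"] xs[of m]
      by eventually_elim (simp add: norm_c field_simps)
    show "(\<lambda>m. 1 / real (Suc m)) \<longlonglongrightarrow> 0" by (rule LIMSEQ_Suc[OF lim_1_over_n])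
  qed simp
  then have "eps_lambda_conv M nrm (\<lambda>m. T (sm (c m) (xs m))) (T 0)"
    using T by (simp add: in_BS_def)
  then have "eps_lambda_conv M nrm (\<lambda>m. sm (c m) (T (xs m))) 0"
    by (simp add: hom_scale[OF hom c] hom_zero[OF hom])
  then show ?thesis
    unfolding eps_lambda_conv_iff_tendsto_zero_in_prob
  proof (rule tendsto_zero_in_prob_dominated[where c = "\<lambda>_. 1", rotated 3])
    show "AE \<omega> in M. nrm (T (xs m)) \<omega> / real (Suc m) \<le> 1 * nrm (sm (c m) (T (xs m)) - 0) \<omega> \<and>
        0 \<le> nrm (sm (c m) (T (xs m)) - 0) \<omega>" for m
      using nrm_scale[OF c, of m "T (xs m)"] nrm_nonneg[of "sm (c m) (T (xs m))"]
      by eventually_elim (simp add: norm_c)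
  qed simp_all
qed

lemma in_BS_bounded:
  assumes T: "in_BS M sm nrm T"
  obtains \<zeta> where "\<zeta> \<in> L0_plus M" "\<And>x. AE \<omega> in M. nrm (T x) \<omega> \<le> \<zeta> \<omega> * nrm x \<omega>"
proof -
  have hom: "is_module_hom M sm UNIV T" using T by (simp add: in_BS_def)
  define F where "F = {nrm (T x) | x. AE \<omega> in M. nrm x \<omega> \<le> 1}"
  have F_meas: "F \<subseteq> borel_measurable M" by (auto simp: F_def)
  have "AE \<omega> in M. nrm 0 \<omega> \<le> 1" using nrm_zero by eventually_elim simp
  then have F_ne: "F \<noteq> {}" unfolding F_def by blast
  obtain fs where fs_F: "\<And>k. fs k \<in> F" and incseq: "AE \<omega> in M. incseq (\<lambda>k. fs k \<omega>)"
    and cofinal: "\<And>f. f \<in> F \<Longrightarrow> AE \<omega> in M. \<forall>c. (\<forall>k. fs k \<omega> \<le> c) \<longrightarrow> f \<omega> \<le> c"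
    using AE_upward_directed_cofinal_incseq[OF F_meas F_ne hom_unit_ball_directed[OF hom, folded F_def]]
    by blast
  have "\<forall>k. \<exists>x. fs k = nrm (T x) \<and> (AE \<omega> in M. nrm x \<omega> \<le> 1)"
    using fs_F by (auto simp: F_def)
  then have "\<exists>xs. \<forall>k. fs k = nrm (T (xs k)) \<and> (AE \<omega> in M. nrm (xs k) \<omega> \<le> 1)"
    by (rule choice)
  then obtain xs where fs_eq: "\<And>k. fs k = nrm (T (xs k))" and xs: "\<And>k. AE \<omega> in M. nrm (xs k) \<omega> \<le> 1"
    by blast
  have fs_meas[measurable]: "fs k \<in> borel_measurable M" for k by (simp add: fs_eq)
  have "AE \<omega> in M. bdd_above (range (\<lambda>k. fs k \<omega>))"
    using incseq in_BS_unit_ball_bounded_in_prob[OF T xs]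
    by (intro AE_bdd_above_incseq) (simp_all add: fs_eq)
  then have fs_le: "AE \<omega> in M. \<forall>k. fs k \<omega> \<le> (SUP k. fs k \<omega>)"
    by eventually_elim (auto intro: cSUP_upper)
  have "AE \<omega> in M. 0 \<le> (SUP k. fs k \<omega>)"
    using fs_le nrm_nonneg[of "T (xs 0)"] by eventually_elim (auto simp: fs_eq intro: order_trans)
  then have "(\<lambda>\<omega>. SUP k. fs k \<omega>) \<in> L0_plus M" by (simp add: L0_plus_def)
  moreover have "AE \<omega> in M. nrm (T x) \<omega> \<le> (SUP k. fs k \<omega>) * nrm x \<omega>" for x
  proof (rule hom_bound_of_unit_ball_bound[OF hom])
    fix u assume "AE \<omega> in M. nrm u \<omega> \<le> 1"
    then have "nrm (T u) \<in> F" by (auto simp: F_def)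
    then show "AE \<omega> in M. nrm (T u) \<omega> \<le> (SUP k. fs k \<omega>)"
      using cofinal fs_le by (fastforce elim: eventually_mono)
  qed
  ultimately show ?thesis by (rule that)
qed

lemma is_L0_inf_L0_opnorm:
  assumes T: "in_BS M sm nrm T"
  shows "is_L0_inf M {\<zeta> \<in> L0_plus M. \<forall>x. AE \<omega> in M. nrm (T x) \<omega> \<le> \<zeta> \<omega> * nrm x \<omega>}
    (L0_opnorm M nrm T)"
proof -
  define Z where "Z = {\<zeta> \<in> L0_plus M. \<forall>x. AE \<omega> in M. nrm (T x) \<omega> \<le> \<zeta> \<omega> * nrm x \<omega>}"
  have Z_meas: "Z \<subseteq> borel_measurable M" by (auto simp: Z_def L0_plus_def)
  have Z_nonneg: "AE \<omega> in M. 0 \<le> \<zeta> \<omega>" if "\<zeta> \<in> Z" for \<zeta>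
    using that by (simp add: Z_def L0_plus_def)
  have Z_ne: "Z \<noteq> {}"
  proof -
    obtain \<zeta> where "\<zeta> \<in> L0_plus M" "\<And>x. AE \<omega> in M. nrm (T x) \<omega> \<le> \<zeta> \<omega> * nrm x \<omega>"
      using in_BS_bounded[OF T] by blast
    then show ?thesis unfolding Z_def by auto
  qed
  have Z_min: "(\<lambda>\<omega>. min (\<zeta>1 \<omega>) (\<zeta>2 \<omega>)) \<in> Z" if "\<zeta>1 \<in> Z" "\<zeta>2 \<in> Z" for \<zeta>1 \<zeta>2
  proof -
    have [measurable]: "\<zeta>1 \<in> borel_measurable M" "\<zeta>2 \<in> borel_measurable M"
      using that Z_meas by auto
    have "AE \<omega> in M. 0 \<le> min (\<zeta>1 \<omega>) (\<zeta>2 \<omega>)"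
      using Z_nonneg[OF that(1)] Z_nonneg[OF that(2)] by eventually_elim simp
    moreover have "AE \<omega> in M. nrm (T x) \<omega> \<le> min (\<zeta>1 \<omega>) (\<zeta>2 \<omega>) * nrm x \<omega>" for x
    proof -
      have "AE \<omega> in M. nrm (T x) \<omega> \<le> \<zeta>1 \<omega> * nrm x \<omega>" "AE \<omega> in M. nrm (T x) \<omega> \<le> \<zeta>2 \<omega> * nrm x \<omega>"
        using that by (auto simp: Z_def)
      then show ?thesis by eventually_elim (simp add: min_def)
    qed
    ultimately show ?thesis unfolding Z_def L0_plus_def by simp
  qed
  have Z_dir: "\<forall>\<zeta>1\<in>Z. \<forall>\<zeta>2\<in>Z. \<exists>\<eta>\<in>Z. AE \<omega> in M. \<eta> \<omega> \<le> \<zeta>1 \<omega> \<and> \<eta> \<omega> \<le> \<zeta>2 \<omega>"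
  proof (intro ballI)
    fix \<zeta>1 \<zeta>2 assume "\<zeta>1 \<in> Z" "\<zeta>2 \<in> Z"
    then show "\<exists>\<eta>\<in>Z. AE \<omega> in M. \<eta> \<omega> \<le> \<zeta>1 \<omega> \<and> \<eta> \<omega> \<le> \<zeta>2 \<omega>"
      using Z_min by (intro bexI[of _ "\<lambda>\<omega>. min (\<zeta>1 \<omega>) (\<zeta>2 \<omega>)"]) auto
  qed
  obtain g where "is_L0_inf M Z g"
    using L0_inf_exists[OF Z_meas Z_ne Z_dir Z_nonneg] by blast
  then show ?thesis unfolding L0_opnorm_def Z_def[symmetric] by (rule someI[of "is_L0_inf M Z"])
qed

lemma L0_opnorm_bound:
  assumes T: "in_BS M sm nrm T"
  shows "AE \<omega> in M. nrm (T x) \<omega> \<le> L0_opnorm M nrm T \<omega> * nrm x \<omega>"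
proof -
  have hom: "is_module_hom M sm UNIV T" using T by (simp add: in_BS_def)
  define h where "h \<omega> = (if 0 < nrm x \<omega> then nrm (T x) \<omega> / nrm x \<omega> else 0)" for \<omega>
  have "h \<in> borel_measurable M" unfolding h_def by measurable
  moreover have "AE \<omega> in M. h \<omega> \<le> \<zeta> \<omega>"
    if "\<zeta> \<in> {\<zeta> \<in> L0_plus M. \<forall>x. AE \<omega> in M. nrm (T x) \<omega> \<le> \<zeta> \<omega> * nrm x \<omega>}" for \<zeta>
  proof -
    have "AE \<omega> in M. nrm (T x) \<omega> \<le> \<zeta> \<omega> * nrm x \<omega>" "AE \<omega> in M. 0 \<le> \<zeta> \<omega>"
      using that by (auto simp: L0_plus_def)
    then show ?thesis by eventually_elim (simp add: h_def divide_le_eq)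
  qed
  ultimately have "AE \<omega> in M. h \<omega> \<le> L0_opnorm M nrm T \<omega>"
    using is_L0_inf_L0_opnorm[OF T] unfolding is_L0_inf_def by blast
  then show ?thesis
    using hom_nrm_eq_0[OF hom, of x] nrm_nonneg[of x]
    by eventually_elim (auto simp: h_def divide_le_eq split: if_splits)
qed

end

section \<open>Resolvents\<close>

lemma L0_pp_measurable: "\<mu> \<in> L0_pp M \<Longrightarrow> \<mu> \<in> borel_measurable M"
  by (simp add: L0_pp_def)

lemma L0_pp_pos: "\<mu> \<in> L0_pp M \<Longrightarrow> AE \<omega> in M. 0 < \<mu> \<omega>"
  by (simp add: L0_pp_def)

lemma L0_pp_one: "(\<lambda>\<omega>. 1) \<in> L0_pp M"
  by (simp add: L0_pp_def)

lemma L0_pp_max: "\<mu> \<in> L0_pp M \<Longrightarrow> \<nu> \<in> L0_pp M \<Longrightarrow> (\<lambda>\<omega>. max (\<mu> \<omega>) (\<nu> \<omega>)) \<in> L0_pp M"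
  unfolding L0_pp_def by (auto elim: eventually_mono)

locale positive_resolvent = RN_module M sm nrm
  for M :: "'w measure" and sm :: "('w \<Rightarrow> 'k::real_normed_field) \<Rightarrow> 's::ab_group_add \<Rightarrow> 's"
    and nrm :: "'s \<Rightarrow> 'w \<Rightarrow> real" +
  fixes D :: "'s set" and A :: "'s \<Rightarrow> 's"
  assumes rho: "\<forall>\<mu>\<in>L0_pp M. (\<lambda>\<omega>. of_real (\<mu> \<omega>)) \<in> resolvent_set M sm nrm D A"
begin

abbreviation R :: "('w \<Rightarrow> real) \<Rightarrow> 's \<Rightarrow> 's" where
  "R \<mu> \<equiv> resolvent sm D A (\<lambda>\<omega>. of_real (\<mu> \<omega>))"

lemma
  assumes "\<mu> \<in> L0_pp M"
  shows resolvent_bij: "bij_betw (shifted_op sm (\<lambda>\<omega>. of_real (\<mu> \<omega>)) A) D UNIV"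
    and resolvent_in_BS: "in_BS M sm nrm (R \<mu>)"
  using rho assms by (auto simp: resolvent_set_def)

lemma resolvent_hom: "\<mu> \<in> L0_pp M \<Longrightarrow> is_module_hom M sm UNIV (R \<mu>)"
  using resolvent_in_BS by (simp add: in_BS_def)

lemma resolvent_in_domain: "\<mu> \<in> L0_pp M \<Longrightarrow> R \<mu> y \<in> D"
  using resolvent_bij[of \<mu>] unfolding resolvent_def bij_betw_def
  by (intro the_inv_into_into) auto

lemma resolvent_right_inverse: "\<mu> \<in> L0_pp M \<Longrightarrow> rscale \<mu> (R \<mu> y) - A (R \<mu> y) = y"
  using resolvent_bij[of \<mu>] f_the_inv_into_f[of "shifted_op sm (\<lambda>\<omega>. of_real (\<mu> \<omega>)) A" D y]
  unfolding resolvent_def bij_betw_def by (auto simp: shifted_op_def rscale_def)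

lemma resolvent_left_inverse: "\<mu> \<in> L0_pp M \<Longrightarrow> z \<in> D \<Longrightarrow> R \<mu> (rscale \<mu> z - A z) = z"
  using resolvent_bij[of \<mu>] the_inv_into_f_f[of "shifted_op sm (\<lambda>\<omega>. of_real (\<mu> \<omega>)) A" D z]
  unfolding resolvent_def bij_betw_def by (auto simp: shifted_op_def rscale_def)

lemma resolvent_identity:
  assumes \<nu>: "\<nu> \<in> L0_pp M" and \<mu>: "\<mu> \<in> L0_pp M"
  shows "R \<nu> y = R \<mu> y + rscale (\<lambda>\<omega>. \<mu> \<omega> - \<nu> \<omega>) (R \<mu> (R \<nu> y))"
proof -
  have [measurable]: "\<nu> \<in> borel_measurable M" "\<mu> \<in> borel_measurable M"
    using \<nu> \<mu> by (simp_all add: L0_pp_measurable)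
  have diff_meas: "(\<lambda>\<omega>. \<mu> \<omega> - \<nu> \<omega>) \<in> borel_measurable M" by measurable
  define u where "u = R \<nu> y"
  have "rscale \<mu> u - A u = rscale (\<lambda>\<omega>. \<mu> \<omega> - \<nu> \<omega>) u + (rscale \<nu> u - A u)"
    using rscale_add_left[of "\<lambda>\<omega>. \<mu> \<omega> - \<nu> \<omega>" \<nu> u] by (simp add: algebra_simps)
  also have "\<dots> = rscale (\<lambda>\<omega>. \<mu> \<omega> - \<nu> \<omega>) u + y"
    unfolding u_def using \<nu> by (simp add: resolvent_right_inverse)
  finally have eq: "rscale \<mu> u - A u = rscale (\<lambda>\<omega>. \<mu> \<omega> - \<nu> \<omega>) u + y" .
  have "u = R \<mu> (rscale \<mu> u - A u)"
    unfolding u_def by (rule resolvent_left_inverse[OF \<mu> resolvent_in_domain[OF \<nu>], symmetric])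
  also have "\<dots> = R \<mu> (rscale (\<lambda>\<omega>. \<mu> \<omega> - \<nu> \<omega>) u + y)" by (simp only: eq)
  also have "\<dots> = rscale (\<lambda>\<omega>. \<mu> \<omega> - \<nu> \<omega>) (R \<mu> u) + R \<mu> y"
    using hom_rscale[OF diff_meas resolvent_hom[OF \<mu>]]
    by (simp only: hom_add[OF resolvent_hom[OF \<mu>]])
  finally show ?thesis unfolding u_def by (simp add: add.commute)
qed

lemma resolvent_convex_combination:
  assumes \<nu>: "\<nu> \<in> L0_pp M" and \<mu>: "\<mu> \<in> L0_pp M"
  shows "rscale \<nu> (R \<nu> y) =
    rscale (\<lambda>\<omega>. \<nu> \<omega> / \<mu> \<omega>) (rscale \<mu> (R \<mu> y)) +
    rscale (\<lambda>\<omega>. (\<mu> \<omega> - \<nu> \<omega>) / \<mu> \<omega>) (rscale \<mu> (R \<mu> (rscale \<nu> (R \<nu> y))))"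
proof -
  have [measurable]: "\<nu> \<in> borel_measurable M" "\<mu> \<in> borel_measurable M"
    using \<nu> \<mu> by (simp_all add: L0_pp_measurable)
  have \<mu>_pos: "AE \<omega> in M. 0 < \<mu> \<omega>" using L0_pp_pos[OF \<mu>] .
  have first: "rscale (\<lambda>\<omega>. \<nu> \<omega> / \<mu> \<omega>) (rscale \<mu> (R \<mu> y)) = rscale \<nu> (R \<mu> y)"
    using \<mu>_pos by (intro rscale_divide_rscale) measurable
  have "rscale (\<lambda>\<omega>. (\<mu> \<omega> - \<nu> \<omega>) / \<mu> \<omega>) (rscale \<mu> (R \<mu> (rscale \<nu> (R \<nu> y)))) =
      rscale (\<lambda>\<omega>. \<mu> \<omega> - \<nu> \<omega>) (R \<mu> (rscale \<nu> (R \<nu> y)))"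
    using \<mu>_pos by (intro rscale_divide_rscale) measurable
  also have "\<dots> = rscale \<nu> (rscale (\<lambda>\<omega>. \<mu> \<omega> - \<nu> \<omega>) (R \<mu> (R \<nu> y)))"
    by (simp add: hom_rscale[OF _ resolvent_hom[OF \<mu>]]) (rule rscale_commute; measurable)
  finally have second: "rscale (\<lambda>\<omega>. (\<mu> \<omega> - \<nu> \<omega>) / \<mu> \<omega>) (rscale \<mu> (R \<mu> (rscale \<nu> (R \<nu> y)))) =
      rscale \<nu> (rscale (\<lambda>\<omega>. \<mu> \<omega> - \<nu> \<omega>) (R \<mu> (R \<nu> y)))" .
  show ?thesis
    unfolding first second by (subst resolvent_identity[OF \<nu> \<mu>]) (simp add: rscale_add_right)
qed

end

section \<open>Pazy's renorming\<close>

context positive_resolvent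
begin

definition scaled_resolvent_pow :: "nat \<Rightarrow> ('w \<Rightarrow> real) \<Rightarrow> 's \<Rightarrow> 's" where
  "scaled_resolvent_pow n \<mu> x = rscale (\<lambda>\<omega>. \<mu> \<omega> ^ n) ((R \<mu> ^^ n) x)"

lemma scaled_resolvent_pow_in_BS:
  assumes \<mu>: "\<mu> \<in> L0_pp M"
  shows "in_BS M sm nrm (scaled_resolvent_pow n \<mu>)"
proof -
  have [measurable]: "\<mu> \<in> borel_measurable M" using \<mu> by (rule L0_pp_measurable)
  show ?thesis unfolding scaled_resolvent_pow_def[abs_def]
    by (intro in_BS_comp[OF in_BS_rscale in_BS_funpow] resolvent_in_BS[OF \<mu>]) measurable
qed

lemma scaled_resolvent_pow_hom: "\<mu> \<in> L0_pp M \<Longrightarrow> is_module_hom M sm UNIV (scaled_resolvent_pow n \<mu>)"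
  using scaled_resolvent_pow_in_BS by (simp add: in_BS_def)

lemma scaled_resolvent_pow_0[simp]: "scaled_resolvent_pow 0 \<mu> x = x"
  by (simp add: scaled_resolvent_pow_def rscale_one)

lemma scaled_resolvent_pow_Suc:
  assumes \<mu>: "\<mu> \<in> L0_pp M"
  shows "scaled_resolvent_pow (Suc n) \<mu> x = rscale \<mu> (R \<mu> (scaled_resolvent_pow n \<mu> x))"
proof -
  have [measurable]: "\<mu> \<in> borel_measurable M" using \<mu> by (rule L0_pp_measurable)
  have "rscale \<mu> (R \<mu> (scaled_resolvent_pow n \<mu> x)) = rscale \<mu> (rscale (\<lambda>\<omega>. \<mu> \<omega> ^ n) ((R \<mu> ^^ Suc n) x))"
    unfolding scaled_resolvent_pow_def by (simp add: hom_rscale[OF _ resolvent_hom[OF \<mu>]])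
  also have "\<dots> = rscale (\<lambda>\<omega>. \<mu> \<omega> * \<mu> \<omega> ^ n) ((R \<mu> ^^ Suc n) x)"
    by (rule rscale_rscale; measurable)
  finally show ?thesis by (simp add: scaled_resolvent_pow_def)
qed

lemma scaled_resolvent_pow_resolvent:
  assumes \<mu>: "\<mu> \<in> L0_pp M"
  shows "scaled_resolvent_pow n \<mu> (rscale \<mu> (R \<mu> z)) = scaled_resolvent_pow (Suc n) \<mu> z"
proof -
  have [measurable]: "\<mu> \<in> borel_measurable M" using \<mu> by (rule L0_pp_measurable)
  have "(R \<mu> ^^ n) (rscale \<mu> (R \<mu> z)) = rscale \<mu> ((R \<mu> ^^ Suc n) z)"
    using in_BS_funpow[OF resolvent_in_BS[OF \<mu>], of n]
    by (simp add: in_BS_def hom_rscale funpow_Suc_right del: funpow.simps)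
  then have "scaled_resolvent_pow n \<mu> (rscale \<mu> (R \<mu> z)) =
      rscale (\<lambda>\<omega>. \<mu> \<omega> ^ n) (rscale \<mu> ((R \<mu> ^^ Suc n) z))"
    by (simp add: scaled_resolvent_pow_def)
  also have "\<dots> = rscale (\<lambda>\<omega>. \<mu> \<omega> ^ n * \<mu> \<omega>) ((R \<mu> ^^ Suc n) z)"
    by (rule rscale_rscale; measurable)
  finally show ?thesis by (simp add: scaled_resolvent_pow_def mult.commute)
qed

end

locale bounded_resolvent_powers = positive_resolvent M sm nrm D A
  for M :: "'w measure" and sm :: "('w \<Rightarrow> 'k::real_normed_field) \<Rightarrow> 's::ab_group_add \<Rightarrow> 's"
    and nrm D A +
  fixes Mb :: "'w \<Rightarrow> real"
  assumes Mb_measurable[measurable]: "Mb \<in> borel_measurable M"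
    and Mb_ge_1: "AE \<omega> in M. 1 \<le> Mb \<omega>"
    and bound: "\<forall>n\<ge>1. \<forall>\<xi>\<in>L0_pp M. AE \<omega> in M.
       L0_opnorm M nrm (\<lambda>x. sm (\<lambda>\<omega>. of_real (\<xi> \<omega> ^ n)) ((R \<xi> ^^ n) x)) \<omega> \<le> Mb \<omega>"
begin

lemma nrm_scaled_resolvent_pow_le:
  assumes \<mu>: "\<mu> \<in> L0_pp M"
  shows "AE \<omega> in M. nrm (scaled_resolvent_pow n \<mu> x) \<omega> \<le> Mb \<omega> * nrm x \<omega>"
proof (cases "n = 0")
  case True
  show ?thesis using Mb_ge_1 nrm_nonneg[of x] unfolding True
    by eventually_elim (simp add: mult_le_cancel_right1)
next
  case False
  have "AE \<omega> in M. L0_opnorm M nrm (scaled_resolvent_pow n \<mu>) \<omega> \<le> Mb \<omega>"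
    using bound False \<mu> unfolding scaled_resolvent_pow_def[abs_def] rscale_def by simp
  then show ?thesis
    using L0_opnorm_bound[OF scaled_resolvent_pow_in_BS[OF \<mu>], of n x] nrm_nonneg[of x]
    by eventually_elim (meson mult_right_mono order_trans)
qed

text \<open>The range is bounded only almost everywhere; on the exceptional null set SUP returns an
  unspecified real, which is harmless because every statement about it holds a.e.\<close>
definition pazy_norm :: "('w \<Rightarrow> real) \<Rightarrow> 's \<Rightarrow> 'w \<Rightarrow> real" where
  "pazy_norm \<mu> x \<omega> = (SUP n. nrm (scaled_resolvent_pow n \<mu> x) \<omega>)"

lemma pazy_norm_measurable[measurable]: "pazy_norm \<mu> x \<in> borel_measurable M"
  unfolding pazy_norm_def[abs_def] by measurable

lemma pazy_norm_least: "(\<And>n. nrm (scaled_resolvent_pow n \<mu> x) \<omega> \<le> c) \<Longrightarrow> pazy_norm \<mu> x \<omega> \<le> c"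
  unfolding pazy_norm_def by (rule cSUP_least) auto

lemma AE_bdd_above_scaled_resolvent_pow:
  assumes "\<mu> \<in> L0_pp M"
  shows "AE \<omega> in M. bdd_above (range (\<lambda>n. nrm (scaled_resolvent_pow n \<mu> x) \<omega>))"
proof -
  have "AE \<omega> in M. \<forall>n. nrm (scaled_resolvent_pow n \<mu> x) \<omega> \<le> Mb \<omega> * nrm x \<omega>"
    unfolding AE_all_countable using nrm_scaled_resolvent_pow_le[OF assms] by blast
  then show ?thesis by eventually_elim (auto intro: bdd_aboveI2)
qed

lemma pazy_norm_upper:
  assumes "\<mu> \<in> L0_pp M"
  shows "AE \<omega> in M. \<forall>n. nrm (scaled_resolvent_pow n \<mu> x) \<omega> \<le> pazy_norm \<mu> x \<omega>"
  using AE_bdd_above_scaled_resolvent_pow[OF assms, of x]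
  by eventually_elim (auto simp: pazy_norm_def intro: cSUP_upper)

lemma nrm_le_pazy_norm:
  assumes "\<mu> \<in> L0_pp M"
  shows "AE \<omega> in M. nrm x \<omega> \<le> pazy_norm \<mu> x \<omega>"
  using pazy_norm_upper[OF assms, of x] by eventually_elim (metis scaled_resolvent_pow_0)

lemma pazy_norm_le:
  assumes "\<mu> \<in> L0_pp M"
  shows "AE \<omega> in M. pazy_norm \<mu> x \<omega> \<le> Mb \<omega> * nrm x \<omega>"
proof -
  have "AE \<omega> in M. \<forall>n. nrm (scaled_resolvent_pow n \<mu> x) \<omega> \<le> Mb \<omega> * nrm x \<omega>"
    unfolding AE_all_countable using nrm_scaled_resolvent_pow_le[OF assms] by blast
  then show ?thesis by eventually_elim (auto intro: pazy_norm_least)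
qed

lemma pazy_norm_triangle:
  assumes \<mu>: "\<mu> \<in> L0_pp M"
  shows "AE \<omega> in M. pazy_norm \<mu> (x + y) \<omega> \<le> pazy_norm \<mu> x \<omega> + pazy_norm \<mu> y \<omega>"
proof -
  have "AE \<omega> in M. \<forall>n. nrm (scaled_resolvent_pow n \<mu> (x + y)) \<omega> \<le>
      nrm (scaled_resolvent_pow n \<mu> x) \<omega> + nrm (scaled_resolvent_pow n \<mu> y) \<omega>"
    unfolding AE_all_countable using nrm_triangle
    by (simp add: hom_add[OF scaled_resolvent_pow_hom[OF \<mu>]])
  then show ?thesis
    using pazy_norm_upper[OF \<mu>, of x] pazy_norm_upper[OF \<mu>, of y]
    by eventually_elim (intro pazy_norm_least, meson add_mono order_trans)
qed

lemma pazy_norm_scale: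
  assumes \<mu>: "\<mu> \<in> L0_pp M" and \<xi>: "\<xi> \<in> L0 M"
  shows "AE \<omega> in M. pazy_norm \<mu> (sm \<xi> x) \<omega> = norm (\<xi> \<omega>) * pazy_norm \<mu> x \<omega>"
proof -
  have "AE \<omega> in M. \<forall>n. nrm (scaled_resolvent_pow n \<mu> (sm \<xi> x)) \<omega> =
      norm (\<xi> \<omega>) * nrm (scaled_resolvent_pow n \<mu> x) \<omega>"
    unfolding AE_all_countable using nrm_scale[OF \<xi>]
    by (simp add: hom_scale[OF scaled_resolvent_pow_hom[OF \<mu>] \<xi>])
  then show ?thesis
    using AE_bdd_above_scaled_resolvent_pow[OF \<mu>, of x]
    by eventually_elim (simp add: pazy_norm_def cSUP_mult_left_nonneg)
qed

lemma pazy_norm_contraction: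
  assumes "\<mu> \<in> L0_pp M"
  shows "AE \<omega> in M. pazy_norm \<mu> (rscale \<mu> (R \<mu> z)) \<omega> \<le> pazy_norm \<mu> z \<omega>"
  using pazy_norm_upper[OF assms, of z]
  by eventually_elim (auto simp: scaled_resolvent_pow_resolvent[OF assms] intro!: pazy_norm_least)

lemma pazy_norm_rscale:
  assumes "\<mu> \<in> L0_pp M" and "a \<in> borel_measurable M"
  shows "AE \<omega> in M. pazy_norm \<mu> (rscale a x) \<omega> = \<bar>a \<omega>\<bar> * pazy_norm \<mu> x \<omega>"
  using pazy_norm_scale[OF assms(1) L0_of_real[OF assms(2)]] by (simp add: rscale_def)

lemma pazy_norm_resolvent_contraction:
  assumes \<nu>: "\<nu> \<in> L0_pp M" and \<mu>: "\<mu> \<in> L0_pp M" and le: "AE \<omega> in M. \<nu> \<omega> \<le> \<mu> \<omega>"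
  shows "AE \<omega> in M. pazy_norm \<mu> (rscale \<nu> (R \<nu> y)) \<omega> \<le> pazy_norm \<mu> y \<omega>"
proof -
  have [measurable]: "\<nu> \<in> borel_measurable M" "\<mu> \<in> borel_measurable M"
    using \<nu> \<mu> by (simp_all add: L0_pp_measurable)
  define z where "z = rscale \<nu> (R \<nu> y)"
  define a where "a \<omega> = \<nu> \<omega> / \<mu> \<omega>" for \<omega>
  define b where "b \<omega> = (\<mu> \<omega> - \<nu> \<omega>) / \<mu> \<omega>" for \<omega>
  have a_meas[measurable]: "a \<in> borel_measurable M" and b_meas[measurable]: "b \<in> borel_measurable M"
    unfolding a_def[abs_def] b_def[abs_def] by measurable
  let ?p = "pazy_norm \<mu>"
  have z: "z = rscale a (rscale \<mu> (R \<mu> y)) + rscale b (rscale \<mu> (R \<mu> z))"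
    unfolding z_def a_def b_def by (rule resolvent_convex_combination[OF \<nu> \<mu>])
  have "AE \<omega> in M. ?p z \<omega> \<le> \<bar>a \<omega>\<bar> * ?p (rscale \<mu> (R \<mu> y)) \<omega> + \<bar>b \<omega>\<bar> * ?p (rscale \<mu> (R \<mu> z)) \<omega>"
    using pazy_norm_triangle[OF \<mu>, of "rscale a (rscale \<mu> (R \<mu> y))" "rscale b (rscale \<mu> (R \<mu> z))"]
      pazy_norm_rscale[OF \<mu> a_meas, of "rscale \<mu> (R \<mu> y)"]
      pazy_norm_rscale[OF \<mu> b_meas, of "rscale \<mu> (R \<mu> z)"]
    unfolding z[symmetric] by eventually_elim simp
  then show ?thesis
    using pazy_norm_contraction[OF \<mu>, of y] pazy_norm_contraction[OF \<mu>, of z]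
      L0_pp_pos[OF \<nu>] L0_pp_pos[OF \<mu>] le
    unfolding z_def[symmetric]
  proof eventually_elim
    case (elim \<omega>)
    then have a: "0 < a \<omega>" and b: "0 \<le> b \<omega>" and ab: "b \<omega> = 1 - a \<omega>"
      by (auto simp: a_def b_def field_simps)
    have "?p z \<omega> \<le> a \<omega> * ?p (rscale \<mu> (R \<mu> y)) \<omega> + b \<omega> * ?p (rscale \<mu> (R \<mu> z)) \<omega>"
      using elim a b by simp
    also have "\<dots> \<le> a \<omega> * ?p y \<omega> + b \<omega> * ?p z \<omega>"
      using elim a b by (intro add_mono mult_left_mono) auto
    finally have "a \<omega> * ?p z \<omega> \<le> a \<omega> * ?p y \<omega>" unfolding ab by (simp add: algebra_simps)
    then show ?case using a by simp
  qed
qed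

lemma pazy_norm_mono:
  assumes \<nu>: "\<nu> \<in> L0_pp M" and \<mu>: "\<mu> \<in> L0_pp M" and le: "AE \<omega> in M. \<nu> \<omega> \<le> \<mu> \<omega>"
  shows "AE \<omega> in M. pazy_norm \<nu> x \<omega> \<le> pazy_norm \<mu> x \<omega>"
proof -
  have step: "AE \<omega> in M. pazy_norm \<mu> (scaled_resolvent_pow n \<nu> x) \<omega> \<le> pazy_norm \<mu> x \<omega>" for n
  proof (induction n)
    case (Suc n)
    then show ?case
      using pazy_norm_resolvent_contraction[OF \<nu> \<mu> le, of "scaled_resolvent_pow n \<nu> x"]
      by eventually_elim (simp add: scaled_resolvent_pow_Suc[OF \<nu>])
  qed simp
  have "AE \<omega> in M. nrm (scaled_resolvent_pow n \<nu> x) \<omega> \<le> pazy_norm \<mu> x \<omega>" for n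
    using nrm_le_pazy_norm[OF \<mu>, of "scaled_resolvent_pow n \<nu> x"] step[of n] by eventually_elim simp
  then have "AE \<omega> in M. \<forall>n. nrm (scaled_resolvent_pow n \<nu> x) \<omega> \<le> pazy_norm \<mu> x \<omega>"
    unfolding AE_all_countable ..
  then show ?thesis by eventually_elim (intro pazy_norm_least, blast)
qed

definition renorm :: "'s \<Rightarrow> 'w \<Rightarrow> real" where
  "renorm x = (SOME g. is_L0_sup M ((\<lambda>\<mu>. pazy_norm \<mu> x) ` L0_pp M) g)"

lemma renorm_is_L0_sup: "is_L0_sup M ((\<lambda>\<mu>. pazy_norm \<mu> x) ` L0_pp M) (renorm x)"
proof -
  let ?F = "(\<lambda>\<mu>. pazy_norm \<mu> x) ` L0_pp M"
  have "AE_upward_directed M ?F"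
    unfolding AE_upward_directed_def
  proof (intro ballI)
    fix f g assume "f \<in> ?F" "g \<in> ?F"
    then obtain \<mu> \<nu> where \<mu>: "\<mu> \<in> L0_pp M" and \<nu>: "\<nu> \<in> L0_pp M"
      and fg: "f = pazy_norm \<mu> x" "g = pazy_norm \<nu> x" by blast
    have max: "(\<lambda>\<omega>. max (\<mu> \<omega>) (\<nu> \<omega>)) \<in> L0_pp M" using L0_pp_max[OF \<mu> \<nu>] .
    have "AE \<omega> in M. f \<omega> \<le> pazy_norm (\<lambda>\<omega>. max (\<mu> \<omega>) (\<nu> \<omega>)) x \<omega> \<and>
        g \<omega> \<le> pazy_norm (\<lambda>\<omega>. max (\<mu> \<omega>) (\<nu> \<omega>)) x \<omega>"
      using pazy_norm_mono[OF \<mu> max, of x] pazy_norm_mono[OF \<nu> max, of x]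
      unfolding fg by (simp add: eventually_conj_iff)
    then show "\<exists>h\<in>?F. AE \<omega> in M. f \<omega> \<le> h \<omega> \<and> g \<omega> \<le> h \<omega>" using max by blast
  qed
  moreover have "?F \<subseteq> borel_measurable M" "?F \<noteq> {}" using L0_pp_one by auto
  moreover have "AE \<omega> in M. f \<omega> \<le> Mb \<omega> * nrm x \<omega>" if "f \<in> ?F" for f
    using that pazy_norm_le by blast
  ultimately obtain g where "is_L0_sup M ?F g"
    using L0_sup_exists[of ?F "\<lambda>\<omega>. Mb \<omega> * nrm x \<omega>"] by blast
  then show ?thesis unfolding renorm_def by (rule someI[of "is_L0_sup M ?F"])
qed

lemma renorm_measurable[measurable]: "renorm x \<in> borel_measurable M"
  using renorm_is_L0_sup by (simp add: is_L0_sup_def)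

lemma renorm_upper: "\<mu> \<in> L0_pp M \<Longrightarrow> AE \<omega> in M. pazy_norm \<mu> x \<omega> \<le> renorm x \<omega>"
  using renorm_is_L0_sup unfolding is_L0_sup_def by blast

lemma renorm_least:
  assumes "h \<in> borel_measurable M" "\<And>\<mu>. \<mu> \<in> L0_pp M \<Longrightarrow> AE \<omega> in M. pazy_norm \<mu> x \<omega> \<le> h \<omega>"
  shows "AE \<omega> in M. renorm x \<omega> \<le> h \<omega>"
  using renorm_is_L0_sup[of x] assms unfolding is_L0_sup_def by blast

lemma nrm_le_renorm: "AE \<omega> in M. nrm x \<omega> \<le> renorm x \<omega>"
  using nrm_le_pazy_norm[OF L0_pp_one, of x] renorm_upper[OF L0_pp_one, of x]
  by eventually_elim simp

lemma renorm_le: "AE \<omega> in M. renorm x \<omega> \<le> Mb \<omega> * nrm x \<omega>"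
  by (rule renorm_least) (simp_all add: pazy_norm_le)

lemma renorm_triangle: "AE \<omega> in M. renorm (x + y) \<omega> \<le> renorm x \<omega> + renorm y \<omega>"
proof (rule renorm_least)
  fix \<mu> assume \<mu>: "\<mu> \<in> L0_pp M"
  show "AE \<omega> in M. pazy_norm \<mu> (x + y) \<omega> \<le> renorm x \<omega> + renorm y \<omega>"
    using pazy_norm_triangle[OF \<mu>, of x y] renorm_upper[OF \<mu>, of x] renorm_upper[OF \<mu>, of y]
    by eventually_elim simp
qed simp

lemma renorm_nonneg: "AE \<omega> in M. 0 \<le> renorm x \<omega>"
  using nrm_le_renorm[of x] nrm_nonneg[of x] by eventually_elim simp

lemma renorm_scale:
  assumes \<xi>: "\<xi> \<in> L0 M"
  shows "AE \<omega> in M. renorm (sm \<xi> x) \<omega> = norm (\<xi> \<omega>) * renorm x \<omega>"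
proof -
  have [measurable]: "\<xi> \<in> borel_measurable M" using \<xi> by (simp add: L0_def)
  have upper: "AE \<omega> in M. renorm (sm \<xi> x) \<omega> \<le> norm (\<xi> \<omega>) * renorm x \<omega>"
  proof (rule renorm_least)
    fix \<mu> assume \<mu>: "\<mu> \<in> L0_pp M"
    show "AE \<omega> in M. pazy_norm \<mu> (sm \<xi> x) \<omega> \<le> norm (\<xi> \<omega>) * renorm x \<omega>"
      using pazy_norm_scale[OF \<mu> \<xi>, of x] renorm_upper[OF \<mu>, of x]
      by eventually_elim (simp add: mult_left_mono)
  qed measurable
  define h where "h \<omega> = (if 0 < norm (\<xi> \<omega>) then renorm (sm \<xi> x) \<omega> / norm (\<xi> \<omega>) else renorm x \<omega>)" for \<omega>
  have "AE \<omega> in M. renorm x \<omega> \<le> h \<omega>"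
  proof (rule renorm_least)
    fix \<mu> assume \<mu>: "\<mu> \<in> L0_pp M"
    show "AE \<omega> in M. pazy_norm \<mu> x \<omega> \<le> h \<omega>"
      using pazy_norm_scale[OF \<mu> \<xi>, of x] renorm_upper[OF \<mu>, of "sm \<xi> x"] renorm_upper[OF \<mu>, of x]
      by eventually_elim (auto simp: h_def le_divide_eq mult.commute)
  qed (unfold h_def, measurable)
  then show ?thesis
    using upper renorm_nonneg[of "sm \<xi> x"]
    by eventually_elim (auto simp: h_def le_divide_eq mult.commute split: if_splits)
qed

lemma renorm_resolvent_contraction:
  assumes \<nu>: "\<nu> \<in> L0_pp M"
  shows "AE \<omega> in M. renorm (rscale \<nu> (R \<nu> x)) \<omega> \<le> renorm x \<omega>"
proof (rule renorm_least)
  fix \<mu> assume \<mu>: "\<mu> \<in> L0_pp M"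
  define \<mu>' where "\<mu>' \<omega> = max (\<nu> \<omega>) (\<mu> \<omega>)" for \<omega>
  have \<mu>': "\<mu>' \<in> L0_pp M" unfolding \<mu>'_def by (rule L0_pp_max[OF \<nu> \<mu>])
  have "AE \<omega> in M. pazy_norm \<mu> (rscale \<nu> (R \<nu> x)) \<omega> \<le> pazy_norm \<mu>' (rscale \<nu> (R \<nu> x)) \<omega>"
    by (rule pazy_norm_mono[OF \<mu> \<mu>']) (simp add: \<mu>'_def)
  moreover have "AE \<omega> in M. pazy_norm \<mu>' (rscale \<nu> (R \<nu> x)) \<omega> \<le> pazy_norm \<mu>' x \<omega>"
    by (rule pazy_norm_resolvent_contraction[OF \<nu> \<mu>']) (simp add: \<mu>'_def)
  moreover have "AE \<omega> in M. pazy_norm \<mu>' x \<omega> \<le> renorm x \<omega>" by (rule renorm_upper[OF \<mu>'])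
  ultimately show "AE \<omega> in M. pazy_norm \<mu> (rscale \<nu> (R \<nu> x)) \<omega> \<le> renorm x \<omega>"
    by eventually_elim simp
qed simp

lemma is_L0_norm_renorm: "is_L0_norm M sm renorm"
  unfolding is_L0_norm_def
proof (intro conjI allI ballI impI)
  show "renorm x \<in> L0_plus M" for x using renorm_nonneg by (simp add: L0_plus_def)
  show "AE \<omega> in M. renorm (sm \<xi> x) \<omega> = norm (\<xi> \<omega>) * renorm x \<omega>" if "\<xi> \<in> L0 M" for \<xi> x
    using that by (rule renorm_scale)
  show "AE \<omega> in M. renorm (x + y) \<omega> \<le> renorm x \<omega> + renorm y \<omega>" for x y
    by (rule renorm_triangle)
  show "x = 0" if "AE \<omega> in M. renorm x \<omega> = 0" for x
  proof (rule nrm_eq_0D)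
    show "AE \<omega> in M. nrm x \<omega> = 0"
      using that nrm_le_renorm[of x] nrm_nonneg[of x] by eventually_elim simp
  qed
qed

lemma equivalent_L0_norms_renorm: "equivalent_L0_norms M nrm renorm"
  unfolding equivalent_L0_norms_def eps_lambda_conv_iff_tendsto_zero_in_prob
proof (intro allI iffI)
  show "tendsto_zero_in_prob M (\<lambda>n. renorm (xs n - x))"
    if "tendsto_zero_in_prob M (\<lambda>n. nrm (xs n - x))" for xs x
  proof (rule tendsto_zero_in_prob_dominated[OF Mb_measurable _ _ that])
    show "AE \<omega> in M. renorm (xs n - x) \<omega> \<le> Mb \<omega> * nrm (xs n - x) \<omega> \<and> 0 \<le> nrm (xs n - x) \<omega>" for n
      using renorm_le[of "xs n - x"] nrm_nonneg[of "xs n - x"] by eventually_elim simp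
  qed simp_all
  show "tendsto_zero_in_prob M (\<lambda>n. nrm (xs n - x))"
    if "tendsto_zero_in_prob M (\<lambda>n. renorm (xs n - x))" for xs x
  proof (rule tendsto_zero_in_prob_dominated[where c = "\<lambda>_. 1", OF _ _ _ that])
    show "AE \<omega> in M. nrm (xs n - x) \<omega> \<le> 1 * renorm (xs n - x) \<omega> \<and> 0 \<le> renorm (xs n - x) \<omega>" for n
      using nrm_le_renorm[of "xs n - x"] renorm_nonneg[of "xs n - x"] by eventually_elim simp
  qed simp_all
qed

end

theorem lemma4p8:
  fixes M :: "'w measure"
    and sm :: "('w \<Rightarrow> 'k::real_normed_field) \<Rightarrow> 's::ab_group_add \<Rightarrow> 's"
    and nrm :: "'s \<Rightarrow> 'w \<Rightarrow> real"
    and D :: "'s set" and A :: "'s \<Rightarrow> 's"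
    and Mb :: "'w \<Rightarrow> real"
  assumes RN: "is_RN_module M sm nrm"
    and complete: "eps_lambda_complete M nrm"
    and D_sub: "is_submodule M sm D"
    and A_hom: "is_module_hom M sm D A"
    and rho: "\<forall>\<xi>\<in>L0_pp M. (\<lambda>\<omega>. of_real (\<xi> \<omega>)) \<in> resolvent_set M sm nrm D A"
    and Mb_L0: "Mb \<in> L0_plus M"
    and Mb_ge1: "AE \<omega> in M. Mb \<omega> \<ge> 1"
    and bound: "\<forall>n\<ge>1. \<forall>\<xi>\<in>L0_pp M. AE \<omega> in M.
       L0_opnorm M nrm (\<lambda>x. sm (\<lambda>\<omega>. of_real (\<xi> \<omega> ^ n))
                                  ((resolvent sm D A (\<lambda>\<omega>. of_real (\<xi> \<omega>)) ^^ n) x)) \<omega>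
       \<le> Mb \<omega>"
  shows "\<exists>nrm' :: 's \<Rightarrow> 'w \<Rightarrow> real.
     is_L0_norm M sm nrm' \<and> equivalent_L0_norms M nrm nrm' \<and>
     (\<forall>x. AE \<omega> in M. nrm x \<omega> \<le> nrm' x \<omega> \<and> nrm' x \<omega> \<le> Mb \<omega> * nrm x \<omega>) \<and>
     (\<forall>x. \<forall>\<xi>\<in>L0_pp M. AE \<omega> in M.
        nrm' (sm (\<lambda>\<omega>. of_real (\<xi> \<omega>)) (resolvent sm D A (\<lambda>\<omega>. of_real (\<xi> \<omega>)) x)) \<omega>
        \<le> nrm' x \<omega>)"
proof -
  interpret bounded_resolvent_powers M sm nrm D A Mb
    using RN rho Mb_L0 Mb_ge1 bound
    by unfold_locales (simp_all add: is_RN_module_def L0_plus_def)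
  have "AE \<omega> in M. nrm x \<omega> \<le> renorm x \<omega> \<and> renorm x \<omega> \<le> Mb \<omega> * nrm x \<omega>" for x
    using nrm_le_renorm[of x] renorm_le[of x] by eventually_elim simp
  moreover have "AE \<omega> in M. renorm (sm (\<lambda>\<omega>. of_real (\<xi> \<omega>)) (R \<xi> x)) \<omega> \<le> renorm x \<omega>"
    if "\<xi> \<in> L0_pp M" for \<xi> x
    using renorm_resolvent_contraction[OF that] by (simp add: rscale_def)
  ultimately show ?thesis
    using is_L0_norm_renorm equivalent_L0_norms_renorm by blast
qed

end
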